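(* Let $\mathbb{F}$ be a field of characteristic zero, $n\ge1$, $a\in(\mathbb{F}^* )^n$ and $B\in\mathbb{F}^{n\times n}$ symmetric. Suppose that $G=G(a,B)$ is twin-free and $\sum_{i=1}^n a_i\neq0$. Then $h(F_1,G)\,h(F_2,G)=h(F_1\cdot F_2,G)$ for all $F_1,F_2\in\mathcal{G}_1$ if and only if $\Gamma(a,B)$ acts transitively on $[n]$.
   Context: Graphs are finite multigraphs, possibly with loops and multiple edges. $G(a,B)$ is the weighted graph on vertex set $[n]$ with vertex weights $a_i$ and edge weights $B_{i,j}$; it is twin-free if no two rows of $B$ are equal. For a graph $F$, $\hom(F,G)=\sum_{\phi:V(F)\to[n]}\prod_{v\in V(F)}a_{\phi(v)}\prod_{uv\in E(F)}B_{\phi(u),\phi(v)}$ (edges with multiplicity) and $h(F,G)=\hom(F,G)/\big(\sum_{i=1}^n a_i\big)^{c(F)}$, where $c(F)$ is the number of connected components of $F$. $\mathcal{G}_1$ is the set of graphs with one labelled vertex; for $F_1,F_2\in\mathcal{G}_1$, $F_1\cdot F_2$ is obtained from their disjoint union by identifying the two labelled vertices; labels are forgotten when evaluating $h$. $\Gamma(a,B)$ is the group of permutations $\gamma$ of $[n]$ with $a_{\gamma(i)}=a_i$ and $B_{\gamma(i),\gamma(j)}=B_{i,j}$ for all $i,j$. *)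

theory Defs
  imports "HOL-Combinatorics.Permutations" "HOL-Library.FuncSet"
begin

text \<open>A finite multigraph (loops and multiple edges allowed) is represented as a pair
  (k, E): vertex set {0..<k}, and E a list of edges (u,v) (multiplicity = number of
  occurrences in the list; a loop is (u,u)).\<close>

type_synonym mgraph = "nat \<times> (nat \<times> nat) list"

definition wf_graph :: "mgraph \<Rightarrow> bool" where
  "wf_graph F \<longleftrightarrow> (\<forall>(u,v)\<in>set (snd F). u < fst F \<and> v < fst F)"

definition conn_rel :: "mgraph \<Rightarrow> (nat \<times> nat) set" where
  "conn_rel F = {(u,v). u < fst F \<and> v < fst F \<and>
      (u,v) \<in> (set (snd F) \<union> (set (snd F))\<inverse>)\<^sup>*}"

definition num_components :: "mgraph \<Rightarrow> nat" where
  "num_components F = card ({0..<fst F} // conn_rel F)"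

definition hom_w :: "mgraph \<Rightarrow> nat \<Rightarrow> (nat \<Rightarrow> 'a::comm_ring_1) \<Rightarrow> (nat \<Rightarrow> nat \<Rightarrow> 'a) \<Rightarrow> 'a" where
  "hom_w F n a B = (\<Sum>\<phi>\<in>({0..<fst F} \<rightarrow>\<^sub>E {0..<n}).
      (\<Prod>v\<in>{0..<fst F}. a (\<phi> v)) * (\<Prod>e\<leftarrow>snd F. B (\<phi> (fst e)) (\<phi> (snd e))))"

definition h_w :: "mgraph \<Rightarrow> nat \<Rightarrow> (nat \<Rightarrow> 'a::field) \<Rightarrow> (nat \<Rightarrow> nat \<Rightarrow> 'a) \<Rightarrow> 'a" where
  "h_w F n a B = hom_w F n a B / (\<Sum>i<n. a i) ^ num_components F"

type_synonym lgraph = "mgraph \<times> nat"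

definition is_lgraph :: "lgraph \<Rightarrow> bool" where
  "is_lgraph FL \<longleftrightarrow> wf_graph (fst FL) \<and> snd FL < fst (fst FL)"

text \<open>Gluing product F1 \<cdot> F2 (labels forgotten): disjoint union, the vertices of F2 are
  renumbered after those of F1 and the label of F2 is identified with the label of F1.\<close>
definition glue_map :: "nat \<Rightarrow> nat \<Rightarrow> nat \<Rightarrow> nat \<Rightarrow> nat" where
  "glue_map k1 l1 l2 v = (if v = l2 then l1 else if v < l2 then k1 + v else k1 + v - 1)"

definition glue :: "lgraph \<Rightarrow> lgraph \<Rightarrow> mgraph" where
  "glue FL1 FL2 = (let (F1,l1) = FL1; (F2,l2) = FL2; k1 = fst F1; k2 = fst F2;
      g = glue_map k1 l1 l2 in
     (k1 + k2 - 1, snd F1 @ map (\<lambda>(u,v). (g u, g v)) (snd F2)))"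

definition twin_free :: "nat \<Rightarrow> (nat \<Rightarrow> nat \<Rightarrow> 'a) \<Rightarrow> bool" where
  "twin_free n B \<longleftrightarrow> (\<forall>i<n. \<forall>j<n. i \<noteq> j \<longrightarrow> (\<exists>k<n. B i k \<noteq> B j k))"

definition aut_group :: "nat \<Rightarrow> (nat \<Rightarrow> 'a) \<Rightarrow> (nat \<Rightarrow> nat \<Rightarrow> 'a) \<Rightarrow> (nat \<Rightarrow> nat) set" where
  "aut_group n a B = {\<gamma>. \<gamma> permutes {0..<n} \<and> (\<forall>i<n. a (\<gamma> i) = a i) \<and>
      (\<forall>i<n. \<forall>j<n. B (\<gamma> i) (\<gamma> j) = B i j)}"

end

theory Submission
  imports Defs
begin

text \<open>If \<Gamma>(a,B) is transitive, the number x_F(i) of homomorphisms of a labelled graph F with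
  its label sent to i does not depend on i; since gluing multiplies these numbers pointwise and merges
  exactly one pair of components, multiplicativity of h is then a direct computation.

  Conversely, multiplicativity extends bilinearly to 1-labelled quantum graphs f, g:
  (\<Sum>i. a i) (\<Sum>i. a i f(i) g(i)) = (\<Sum>i. a i f(i)) (\<Sum>i. a i g(i)). Edge weights and weighted "vertex tests",
  interpolated by Lagrange polynomials over their finitely many values, give an n-labelled quantum graph
  that is the indicator of the labellings of the same type as a reference labelling \<tau>; by twin-freeness
  these are exactly the \<gamma> \<circ> \<tau> with \<gamma> \<in> \<Gamma>. Summing out all labels but one and interpolating again yields
  a 1-labelled quantum graph whose value at i is the indicator of an orbit of \<Gamma>. For two distinct orbits
  the left-hand side above vanishes, whereas in characteristic zero the orbit weights on the right do not.\<close>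

definition edge_weight :: "(nat \<Rightarrow> nat \<Rightarrow> 'a::comm_ring_1) \<Rightarrow> (nat \<times> nat) list \<Rightarrow> (nat \<Rightarrow> nat) \<Rightarrow> 'a" where
  "edge_weight B E \<phi> = (\<Prod>e\<leftarrow>E. B (\<phi> (fst e)) (\<phi> (snd e)))"

text \<open>The vertices in X are summed over [n]; every other vertex v is labelled and is sent to \<psi> v.\<close>
definition partial_hom :: "nat \<Rightarrow> (nat \<Rightarrow> 'a::comm_ring_1) \<Rightarrow> (nat \<Rightarrow> nat \<Rightarrow> 'a) \<Rightarrow> nat set \<Rightarrow>
    (nat \<times> nat) list \<Rightarrow> (nat \<Rightarrow> nat) \<Rightarrow> 'a" where
  "partial_hom n a B X E \<psi> =
     (\<Sum>\<chi>\<in>X \<rightarrow>\<^sub>E {..<n}. (\<Prod>v\<in>X. a (\<chi> v)) * edge_weight B E (override_on \<psi> \<chi> X))"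

lemma edge_weight_append: "edge_weight B (E1 @ E2) \<phi> = edge_weight B E1 \<phi> * edge_weight B E2 \<phi>"
  by (simp add: edge_weight_def)

lemma edge_weight_cong:
  "(\<And>e. e \<in> set E \<Longrightarrow> \<phi> (fst e) = \<phi>' (fst e) \<and> \<phi> (snd e) = \<phi>' (snd e)) \<Longrightarrow>
    edge_weight B E \<phi> = edge_weight B E \<phi>'"
  unfolding edge_weight_def by (induction E) auto

lemma hom_w_eq_partial_hom: "hom_w F n a B = partial_hom n a B {0..<fst F} (snd F) (\<lambda>_. undefined)"
proof -
  have "override_on (\<lambda>_. undefined) \<phi> {0..<fst F} = \<phi>" if "\<phi> \<in> {0..<fst F} \<rightarrow>\<^sub>E {..<n}" for \<phi>
    by (simp add: override_on_def fun_eq_iff PiE_arb[OF that])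
  then show ?thesis
    unfolding hom_w_def partial_hom_def edge_weight_def atLeast0LessThan[of n]
    by (intro sum.cong) simp_all
qed

lemma partial_hom_cong:
  assumes "\<And>e v. e \<in> set E \<Longrightarrow> v = fst e \<or> v = snd e \<Longrightarrow> v \<notin> X \<Longrightarrow> \<psi> v = \<psi>' v"
  shows "partial_hom n a B X E \<psi> = partial_hom n a B X E \<psi>'"
proof -
  have "edge_weight B E (override_on \<psi> \<chi> X) = edge_weight B E (override_on \<psi>' \<chi> X)" for \<chi>
    by (rule edge_weight_cong) (auto simp: override_on_def dest: assms)
  then show ?thesis unfolding partial_hom_def by simp
qed

lemma sum_PiE_Un_override_on:
  assumes "Y \<inter> Z = {}"
  shows "(\<Sum>\<chi>\<in>(Y \<union> Z) \<rightarrow>\<^sub>E T. f \<chi>) =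
    (\<Sum>\<chi>1\<in>Y \<rightarrow>\<^sub>E T. \<Sum>\<chi>2\<in>Z \<rightarrow>\<^sub>E T. f (override_on \<chi>2 \<chi>1 Y))"
proof -
  have restrict_override: "override_on (restrict \<chi> Z) (restrict \<chi> Y) Y = \<chi>" if "\<chi> \<in> (Y \<union> Z) \<rightarrow>\<^sub>E T" for \<chi>
    by (simp add: override_on_def fun_eq_iff PiE_arb[OF that])
  have "(\<Sum>\<chi>\<in>(Y \<union> Z) \<rightarrow>\<^sub>E T. f \<chi>) =
      (\<Sum>p\<in>(Y \<rightarrow>\<^sub>E T) \<times> (Z \<rightarrow>\<^sub>E T). f (override_on (snd p) (fst p) Y))"
  proof (rule sum.reindex_bij_witness[of _ "\<lambda>p. override_on (snd p) (fst p) Y"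
        "\<lambda>\<chi>. (restrict \<chi> Y, restrict \<chi> Z)"])
    fix \<chi> assume \<chi>: "\<chi> \<in> (Y \<union> Z) \<rightarrow>\<^sub>E T"
    then show "override_on (snd (restrict \<chi> Y, restrict \<chi> Z)) (fst (restrict \<chi> Y, restrict \<chi> Z)) Y = \<chi>"
      by (simp add: restrict_override)
    show "(restrict \<chi> Y, restrict \<chi> Z) \<in> (Y \<rightarrow>\<^sub>E T) \<times> (Z \<rightarrow>\<^sub>E T)" using \<chi> by auto
  next
    fix p assume p: "p \<in> (Y \<rightarrow>\<^sub>E T) \<times> (Z \<rightarrow>\<^sub>E T)"
    obtain \<chi>1 \<chi>2 where p_eq: "p = (\<chi>1, \<chi>2)" by fastforce
    have \<chi>: "\<chi>1 \<in> Y \<rightarrow>\<^sub>E T" "\<chi>2 \<in> Z \<rightarrow>\<^sub>E T" using p p_eq by auto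
    show "(restrict (override_on (snd p) (fst p) Y) Y, restrict (override_on (snd p) (fst p) Y) Z) = p"
      using \<chi> assms unfolding p_eq
      by (auto simp: override_on_def fun_eq_iff PiE_arb[OF \<chi>(1)] PiE_arb[OF \<chi>(2)])
    show "override_on (snd p) (fst p) Y \<in> (Y \<union> Z) \<rightarrow>\<^sub>E T"
      using \<chi> unfolding p_eq by (auto simp: override_on_def PiE_iff extensional_def)
  qed (simp add: restrict_override)
  also have "\<dots> = (\<Sum>\<chi>1\<in>Y \<rightarrow>\<^sub>E T. \<Sum>\<chi>2\<in>Z \<rightarrow>\<^sub>E T. f (override_on \<chi>2 \<chi>1 Y))"
    by (simp only: sum.cartesian_product' fst_conv snd_conv)
  finally show ?thesis .
qed

lemma partial_hom_Un:
  assumes "finite Y" "finite Z" "Y \<inter> Z = {}"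
  shows "partial_hom n a B (Y \<union> Z) E \<psi> =
    (\<Sum>\<chi>\<in>Y \<rightarrow>\<^sub>E {..<n}. (\<Prod>v\<in>Y. a (\<chi> v)) * partial_hom n a B Z E (override_on \<psi> \<chi> Y))"
proof -
  have split: "(\<Prod>v\<in>Y \<union> Z. a (override_on \<chi>2 \<chi>1 Y v)) * edge_weight B E (override_on \<psi> (override_on \<chi>2 \<chi>1 Y) (Y \<union> Z))
      = (\<Prod>v\<in>Y. a (\<chi>1 v)) * ((\<Prod>v\<in>Z. a (\<chi>2 v)) * edge_weight B E (override_on (override_on \<psi> \<chi>1 Y) \<chi>2 Z))"
    for \<chi>1 \<chi>2
  proof -
    have "override_on \<psi> (override_on \<chi>2 \<chi>1 Y) (Y \<union> Z) = override_on (override_on \<psi> \<chi>1 Y) \<chi>2 Z"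
      using assms(3) by (auto simp: override_on_def fun_eq_iff)
    moreover have "(\<Prod>v\<in>Z. a (override_on \<chi>2 \<chi>1 Y v)) = (\<Prod>v\<in>Z. a (\<chi>2 v))"
      using assms(3) by (intro prod.cong) (auto simp: override_on_def)
    ultimately show ?thesis
      using assms by (simp add: prod.union_disjoint mult.assoc)
  qed
  show ?thesis
    unfolding partial_hom_def sum_PiE_Un_override_on[OF assms(3)] split sum_distrib_left ..
qed

lemma partial_hom_append_labelled:
  assumes "\<And>e. e \<in> set E1 \<Longrightarrow> fst e \<notin> X \<and> snd e \<notin> X"
  shows "partial_hom n a B X (E1 @ E2) \<psi> = edge_weight B E1 \<psi> * partial_hom n a B X E2 \<psi>"
proof -
  have "edge_weight B E1 (override_on \<psi> \<chi> X) = edge_weight B E1 \<psi>" for \<chi>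
    by (rule edge_weight_cong) (auto dest: assms)
  then show ?thesis unfolding partial_hom_def edge_weight_append sum_distrib_left
    by (simp only: mult.left_commute)
qed

lemma partial_hom_disjoint_Un:
  assumes "finite X1" "finite X2" "X1 \<inter> X2 = {}"
    and "\<And>e. e \<in> set E1 \<Longrightarrow> fst e \<notin> X2 \<and> snd e \<notin> X2"
    and "\<And>e. e \<in> set E2 \<Longrightarrow> fst e \<notin> X1 \<and> snd e \<notin> X1"
  shows "partial_hom n a B (X1 \<union> X2) (E1 @ E2) \<psi> = partial_hom n a B X1 E1 \<psi> * partial_hom n a B X2 E2 \<psi>"
proof -
  have "partial_hom n a B X2 (E1 @ E2) (override_on \<psi> \<chi> X1) =
      edge_weight B E1 (override_on \<psi> \<chi> X1) * partial_hom n a B X2 E2 \<psi>" for \<chi>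
  proof -
    have "partial_hom n a B X2 E2 (override_on \<psi> \<chi> X1) = partial_hom n a B X2 E2 \<psi>"
      by (rule partial_hom_cong) (auto dest: assms(5))
    then show ?thesis by (simp add: partial_hom_append_labelled[of E1 X2, OF assms(4)])
  qed
  then show ?thesis
    unfolding partial_hom_Un[OF assms(1-3)] partial_hom_def[of n a B X1] sum_distrib_right
    by (simp add: mult.assoc)
qed

lemma bij_betw_PiE_comp:
  assumes bij: "bij_betw \<sigma> X' X"
  shows "bij_betw (\<lambda>\<chi>. restrict (\<chi> \<circ> \<sigma>) X') (X \<rightarrow>\<^sub>E T) (X' \<rightarrow>\<^sub>E T)"
proof (rule bij_betwI[where g="\<lambda>\<chi>'. restrict (\<chi>' \<circ> inv_into X' \<sigma>) X"])
  have inj: "inj_on \<sigma> X'" and im: "\<sigma> ` X' = X" using bij by (auto simp: bij_betw_def)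
  show "(\<lambda>\<chi>. restrict (\<chi> \<circ> \<sigma>) X') \<in> (X \<rightarrow>\<^sub>E T) \<rightarrow> (X' \<rightarrow>\<^sub>E T)" using im by (auto simp: PiE_iff)
  show "(\<lambda>\<chi>'. restrict (\<chi>' \<circ> inv_into X' \<sigma>) X) \<in> (X' \<rightarrow>\<^sub>E T) \<rightarrow> (X \<rightarrow>\<^sub>E T)"
    using im by (auto simp: PiE_iff inv_into_into)
  fix \<chi> assume \<chi>: "\<chi> \<in> X \<rightarrow>\<^sub>E T"
  show "restrict (restrict (\<chi> \<circ> \<sigma>) X' \<circ> inv_into X' \<sigma>) X = \<chi>"
  proof
    fix x show "restrict (restrict (\<chi> \<circ> \<sigma>) X' \<circ> inv_into X' \<sigma>) X x = \<chi> x"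
    proof (cases "x \<in> X")
      case True
      then have "inv_into X' \<sigma> x \<in> X'" "\<sigma> (inv_into X' \<sigma> x) = x"
        using im by (auto intro: inv_into_into f_inv_into_f)
      then show ?thesis using True by simp
    qed (simp add: PiE_arb[OF \<chi>])
  qed
next
  have inj: "inj_on \<sigma> X'" and im: "\<sigma> ` X' = X" using bij by (auto simp: bij_betw_def)
  fix \<chi>' assume \<chi>': "\<chi>' \<in> X' \<rightarrow>\<^sub>E T"
  show "restrict (restrict (\<chi>' \<circ> inv_into X' \<sigma>) X \<circ> \<sigma>) X' = \<chi>'"
  proof
    fix x show "restrict (restrict (\<chi>' \<circ> inv_into X' \<sigma>) X \<circ> \<sigma>) X' x = \<chi>' x"
    proof (cases "x \<in> X'")
      case True
      then have "\<sigma> x \<in> X" "inv_into X' \<sigma> (\<sigma> x) = x" using im inj by (auto intro: inv_into_f_f)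
      then show ?thesis using True by simp
    qed (simp add: PiE_arb[OF \<chi>'])
  qed
qed

lemma partial_hom_rename:
  assumes bij: "bij_betw \<sigma> X' X"
    and closed: "\<And>e v. e \<in> set E \<Longrightarrow> v = fst e \<or> v = snd e \<Longrightarrow> \<sigma> v \<in> X \<Longrightarrow> v \<in> X'"
  shows "partial_hom n a B X (map (\<lambda>(u,v). (\<sigma> u, \<sigma> v)) E) \<psi> = partial_hom n a B X' E (\<psi> \<circ> \<sigma>)"
proof -
  have inj: "inj_on \<sigma> X'" and im: "\<sigma> ` X' = X" using bij by (auto simp: bij_betw_def)
  have "(\<Prod>v\<in>X'. a (restrict (\<chi> \<circ> \<sigma>) X' v)) * edge_weight B E (override_on (\<psi> \<circ> \<sigma>) (restrict (\<chi> \<circ> \<sigma>) X') X') =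
      (\<Prod>v\<in>X. a (\<chi> v)) * edge_weight B (map (\<lambda>(u, v). (\<sigma> u, \<sigma> v)) E) (override_on \<psi> \<chi> X)" for \<chi>
  proof -
    have "(\<Prod>v\<in>X'. a (restrict (\<chi> \<circ> \<sigma>) X' v)) = (\<Prod>v\<in>X. a (\<chi> v))"
      using prod.reindex[OF inj, of "\<lambda>v. a (\<chi> v)"] im by simp
    moreover have key: "override_on (\<psi> \<circ> \<sigma>) (restrict (\<chi> \<circ> \<sigma>) X') X' w = override_on \<psi> \<chi> X (\<sigma> w)"
      if "e \<in> set E" "w = fst e \<or> w = snd e" for e w
      using closed[OF that] im by (auto simp: override_on_def)
    then have "edge_weight B E (override_on (\<psi> \<circ> \<sigma>) (restrict (\<chi> \<circ> \<sigma>) X') X') =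
        edge_weight B E (override_on \<psi> \<chi> X \<circ> \<sigma>)"
      by (intro edge_weight_cong) (simp add: key)
    moreover have "edge_weight B E (override_on \<psi> \<chi> X \<circ> \<sigma>) =
        edge_weight B (map (\<lambda>(u, v). (\<sigma> u, \<sigma> v)) E) (override_on \<psi> \<chi> X)"
      unfolding edge_weight_def by (simp add: case_prod_beta o_def)
    ultimately show ?thesis by simp
  qed
  then show ?thesis
    unfolding partial_hom_def sum.reindex_bij_betw[OF bij_betw_PiE_comp[OF bij], symmetric] by simp
qed

section \<open>Gluing at the labelled vertex\<close>

definition rooted_hom :: "nat \<Rightarrow> (nat \<Rightarrow> 'a::comm_ring_1) \<Rightarrow> (nat \<Rightarrow> nat \<Rightarrow> 'a) \<Rightarrow> mgraph \<Rightarrow> nat \<Rightarrow> nat \<Rightarrow> 'a" where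
  "rooted_hom n a B F l i = partial_hom n a B ({0..<fst F} - {l}) (snd F) (\<lambda>_. i)"

lemma sum_PiE_singleton: "(\<Sum>\<chi>\<in>{l} \<rightarrow>\<^sub>E T. f (\<chi> l)) = (\<Sum>w\<in>T. f w)"
proof (rule sum.reindex_bij_witness[of _ "\<lambda>w. restrict (\<lambda>_. w) {l}" "\<lambda>\<chi>. \<chi> l"])
  fix \<chi> assume "\<chi> \<in> {l} \<rightarrow>\<^sub>E T"
  then show "restrict (\<lambda>_. \<chi> l) {l} = \<chi>" by (simp add: fun_eq_iff PiE_arb[of \<chi>])
qed auto

lemma wf_graph_edge: "wf_graph F \<Longrightarrow> e \<in> set (snd F) \<Longrightarrow> fst e < fst F \<and> snd e < fst F"
  unfolding wf_graph_def by auto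

lemma hom_w_eq_sum_rooted_hom:
  assumes "is_lgraph (F, l)"
  shows "hom_w F n a B = (\<Sum>i<n. a i * rooted_hom n a B F l i)"
proof -
  have wf: "wf_graph F" and l: "l < fst F" using assms by (auto simp: is_lgraph_def)
  have "{0..<fst F} = {l} \<union> ({0..<fst F} - {l})" using l by auto
  then have "hom_w F n a B = partial_hom n a B ({l} \<union> ({0..<fst F} - {l})) (snd F) (\<lambda>_. undefined)"
    using hom_w_eq_partial_hom by metis
  also have "\<dots> = (\<Sum>\<chi>\<in>{l} \<rightarrow>\<^sub>E {..<n}. (\<Prod>v\<in>{l}. a (\<chi> v)) *
      partial_hom n a B ({0..<fst F} - {l}) (snd F) (override_on (\<lambda>_. undefined) \<chi> {l}))"
    by (rule partial_hom_Un) auto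
  also have "\<dots> = (\<Sum>\<chi>\<in>{l} \<rightarrow>\<^sub>E {..<n}. a (\<chi> l) * rooted_hom n a B F l (\<chi> l))"
  proof -
    have "partial_hom n a B ({0..<fst F} - {l}) (snd F) (override_on (\<lambda>_. undefined) \<chi> {l}) =
        rooted_hom n a B F l (\<chi> l)" for \<chi>
      unfolding rooted_hom_def
      by (rule partial_hom_cong) (use wf_graph_edge[OF wf] in \<open>fastforce simp: override_on_def\<close>)
    then show ?thesis by simp
  qed
  also have "\<dots> = (\<Sum>i<n. a i * rooted_hom n a B F l i)"
    by (rule sum_PiE_singleton)
  finally show ?thesis .
qed

definition unglue_map :: "nat \<Rightarrow> nat \<Rightarrow> nat \<Rightarrow> nat" where
  "unglue_map k1 l2 x = (if x < k1 then l2 else if x - k1 < l2 then x - k1 else x - k1 + 1)"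

lemma glue_Pair: "glue (F1, l1) (F2, l2) = (fst F1 + fst F2 - 1,
   snd F1 @ map (\<lambda>(u,v). (glue_map (fst F1) l1 l2 u, glue_map (fst F1) l1 l2 v)) (snd F2))"
  by (simp add: glue_def Let_def)

lemma unglue_map_glue_map: "l1 < k1 \<Longrightarrow> unglue_map k1 l2 (glue_map k1 l1 l2 u) = u"
  by (auto simp: unglue_map_def glue_map_def)

lemma glue_map_less: "l1 < k1 \<Longrightarrow> u < k2 \<Longrightarrow> l2 < k2 \<Longrightarrow> glue_map k1 l1 l2 u < k1 + k2 - 1"
  by (auto simp: glue_map_def)

lemma glue_map_less_iff: "l1 < k1 \<Longrightarrow> glue_map k1 l1 l2 u < k1 \<longleftrightarrow> u = l2"
  by (auto simp: glue_map_def)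

lemma bij_betw_glue_map:
  assumes "l1 < k1" "l2 < k2"
  shows "bij_betw (glue_map k1 l1 l2) ({0..<k2} - {l2}) {k1..<k1 + k2 - 1}"
proof (rule bij_betw_byWitness[where f'="unglue_map k1 l2"])
  show "\<forall>a\<in>{0..<k2} - {l2}. unglue_map k1 l2 (glue_map k1 l1 l2 a) = a"
    using assms unglue_map_glue_map by blast
  show "\<forall>a'\<in>{k1..<k1 + k2 - 1}. glue_map k1 l1 l2 (unglue_map k1 l2 a') = a'"
    by (auto simp: unglue_map_def glue_map_def)
  show "glue_map k1 l1 l2 ` ({0..<k2} - {l2}) \<subseteq> {k1..<k1 + k2 - 1}"
    using assms by (auto simp: glue_map_def)
  show "unglue_map k1 l2 ` {k1..<k1 + k2 - 1} \<subseteq> {0..<k2} - {l2}"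
    using assms by (auto simp: unglue_map_def)
qed

lemma is_lgraph_glue:
  assumes "is_lgraph (F1, l1)" "is_lgraph (F2, l2)"
  shows "is_lgraph (glue (F1, l1) (F2, l2), l1)"
  using assms unfolding is_lgraph_def glue_Pair wf_graph_def
  by (force simp: glue_map_def)

lemma rooted_hom_glue:
  assumes "is_lgraph (F1, l1)" "is_lgraph (F2, l2)"
  shows "rooted_hom n a B (glue (F1, l1) (F2, l2)) l1 i = rooted_hom n a B F1 l1 i * rooted_hom n a B F2 l2 i"
proof -
  define k1 where "k1 = fst F1"
  define k2 where "k2 = fst F2"
  define g where "g = glue_map k1 l1 l2"
  have wf1: "wf_graph F1" and l1: "l1 < k1" and wf2: "wf_graph F2" and l2: "l2 < k2"
    using assms by (auto simp: is_lgraph_def k1_def k2_def)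
  have "{0..<k1 + k2 - 1} - {l1} = ({0..<k1} - {l1}) \<union> {k1..<k1 + k2 - 1}" using l1 l2 by auto
  then have "rooted_hom n a B (glue (F1, l1) (F2, l2)) l1 i =
     partial_hom n a B (({0..<k1} - {l1}) \<union> {k1..<k1 + k2 - 1}) (snd F1 @ map (\<lambda>(u,v). (g u, g v)) (snd F2)) (\<lambda>_. i)"
    unfolding rooted_hom_def glue_Pair g_def k1_def k2_def by simp
  also have "\<dots> = rooted_hom n a B F1 l1 i * partial_hom n a B {k1..<k1 + k2 - 1} (map (\<lambda>(u,v). (g u, g v)) (snd F2)) (\<lambda>_. i)"
    unfolding rooted_hom_def k1_def
  proof (rule partial_hom_disjoint_Un)
    fix e assume "e \<in> set (snd F1)"
    then show "fst e \<notin> {fst F1..<fst F1 + k2 - 1} \<and> snd e \<notin> {fst F1..<fst F1 + k2 - 1}"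
      using wf_graph_edge[OF wf1, of e] by auto
  next
    fix e assume "e \<in> set (map (\<lambda>(u,v). (g u, g v)) (snd F2))"
    moreover have "g w \<notin> {0..<fst F1} - {l1}" for w
      using l1 by (auto simp: g_def k1_def glue_map_def)
    ultimately show "fst e \<notin> {0..<fst F1} - {l1} \<and> snd e \<notin> {0..<fst F1} - {l1}" by auto
  qed auto
  also have "partial_hom n a B {k1..<k1 + k2 - 1} (map (\<lambda>(u,v). (g u, g v)) (snd F2)) (\<lambda>_. i) =
     rooted_hom n a B F2 l2 i"
    unfolding rooted_hom_def
  proof (subst partial_hom_rename)
    show "bij_betw g ({0..<fst F2} - {l2}) {k1..<k1 + k2 - 1}"
      using l1 l2 unfolding g_def k2_def by (intro bij_betw_glue_map)
    fix e v assume "e \<in> set (snd F2)" "v = fst e \<or> v = snd e" "g v \<in> {k1..<k1 + k2 - 1}"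
    then show "v \<in> {0..<fst F2} - {l2}" using wf_graph_edge[OF wf2, of e] l1 k2_def
      by (auto simp: g_def glue_map_def)
  qed (simp_all add: o_def)
  finally show ?thesis .
qed

lemma hom_w_glue:
  assumes "is_lgraph (F1, l1)" "is_lgraph (F2, l2)"
  shows "hom_w (glue (F1, l1) (F2, l2)) n a B = (\<Sum>i<n. a i * (rooted_hom n a B F1 l1 i * rooted_hom n a B F2 l2 i))"
  by (simp add: hom_w_eq_sum_rooted_hom[OF is_lgraph_glue[OF assms]] rooted_hom_glue[OF assms])

section \<open>Connected components of a glued graph\<close>

definition undirected_edges :: "mgraph \<Rightarrow> (nat \<times> nat) set" where
  "undirected_edges F = set (snd F) \<union> (set (snd F))\<inverse>"

lemma rtrancl_map:
  assumes "\<And>x y. (x,y) \<in> R \<Longrightarrow> (f x, f y) \<in> R'\<^sup>*" "(x,y) \<in> R\<^sup>*"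
  shows "(f x, f y) \<in> R'\<^sup>*"
  using assms(2)
proof (induction rule: rtrancl_induct)
  case (step y z)
  then show ?case using assms(1)[of y z] by (meson rtrancl_trans)
qed simp

lemma card_image_eq_if_same_fibres:
  assumes "\<And>x y. x \<in> A \<Longrightarrow> y \<in> A \<Longrightarrow> f x = f y \<longleftrightarrow> g x = g y"
  shows "card (f ` A) = card (g ` A)"
proof -
  define h where "h = (\<lambda>z. g (inv_into A f z))"
  have hf: "h (f x) = g x" if "x \<in> A" for x
  proof -
    have "inv_into A f (f x) \<in> A" "f (inv_into A f (f x)) = f x"
      using that by (auto intro: inv_into_into f_inv_into_f)
    then show ?thesis unfolding h_def using assms that by blast
  qed
  have "inj_on h (f ` A)"
    by (rule inj_onI) (use assms hf in auto)
  moreover have "h ` f ` A = g ` A" using hf by (auto simp: image_image)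
  ultimately show ?thesis by (metis card_image)
qed

lemma undirected_edges_less: "wf_graph F \<Longrightarrow> (u,v) \<in> undirected_edges F \<Longrightarrow> u < fst F \<and> v < fst F"
  unfolding undirected_edges_def wf_graph_def by auto

lemma conn_rel_Image_eq_iff:
  assumes "x < fst F" "y < fst F"
  shows "conn_rel F `` {x} = conn_rel F `` {y} \<longleftrightarrow> (x,y) \<in> (undirected_edges F)\<^sup>*"
proof
  assume "conn_rel F `` {x} = conn_rel F `` {y}"
  moreover have "y \<in> conn_rel F `` {y}" using assms by (simp add: conn_rel_def)
  ultimately show "(x,y) \<in> (undirected_edges F)\<^sup>*" by (auto simp: conn_rel_def undirected_edges_def)
next
  assume xy: "(x,y) \<in> (undirected_edges F)\<^sup>*"
  then have yx: "(y,x) \<in> (undirected_edges F)\<^sup>*"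
    unfolding undirected_edges_def by (metis sym_Un_converse sym_rtrancl symD)
  show "conn_rel F `` {x} = conn_rel F `` {y}"
  proof (intro set_eqI iffI)
    fix z assume "z \<in> conn_rel F `` {x}"
    then show "z \<in> conn_rel F `` {y}"
      using yx assms by (auto simp: conn_rel_def undirected_edges_def intro: rtrancl_trans)
  next
    fix z assume "z \<in> conn_rel F `` {y}"
    then show "z \<in> conn_rel F `` {x}"
      using xy assms by (auto simp: conn_rel_def undirected_edges_def intro: rtrancl_trans)
  qed
qed

lemma num_components_eq_card_image:
  "num_components F = card ((\<lambda>x. conn_rel F `` {x}) ` {0..<fst F})"
proof -
  have "{0..<fst F} // conn_rel F = (\<lambda>x. conn_rel F `` {x}) ` {0..<fst F}"
    by (auto simp: quotient_def)
  then show ?thesis by (simp add: num_components_def)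
qed

lemma num_components_pos:
  assumes "is_lgraph (F, l)"
  shows "num_components F \<ge> 1"
  using assms by (auto simp: num_components_eq_card_image is_lgraph_def Suc_leI card_gt_0_iff)

context
  fixes F1 F2 :: mgraph and l1 l2 :: nat
  assumes lgraph1: "is_lgraph (F1, l1)" and lgraph2: "is_lgraph (F2, l2)"
begin

private abbreviation "g \<equiv> glue_map (fst F1) l1 l2"
private abbreviation "G \<equiv> glue (F1, l1) (F2, l2)"

lemma undirected_edges_glue:
  "undirected_edges G = undirected_edges F1 \<union> map_prod g g ` undirected_edges F2"
  unfolding undirected_edges_def glue_Pair by force

text \<open>Collapsing all of F2 onto the label l1 maps paths of the glued graph to paths of F1.\<close>
lemma glue_rtrancl_left:
  assumes "x < fst F1" "y < fst F1"
  shows "(x,y) \<in> (undirected_edges G)\<^sup>* \<longleftrightarrow> (x,y) \<in> (undirected_edges F1)\<^sup>*"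
proof
  define p where "p = (\<lambda>x. if x < fst F1 then x else l1)"
  have l1: "l1 < fst F1" using lgraph1 by (simp add: is_lgraph_def)
  have "(p u, p v) \<in> (undirected_edges F1)\<^sup>*" if uv: "(u,v) \<in> undirected_edges G" for u v
  proof (cases "(u,v) \<in> undirected_edges F1")
    case True
    then show ?thesis using undirected_edges_less[of F1] lgraph1 by (auto simp: p_def is_lgraph_def)
  next
    case False
    then obtain u' v' where "u = g u'" "v = g v'"
      using uv unfolding undirected_edges_glue by fastforce
    then have "p u = l1" "p v = l1" using glue_map_less_iff[OF l1] by (auto simp: p_def glue_map_def)
    then show ?thesis by simp
  qed
  moreover assume "(x,y) \<in> (undirected_edges G)\<^sup>*"
  ultimately have "(p x, p y) \<in> (undirected_edges F1)\<^sup>*" by (rule rtrancl_map)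
  then show "(x,y) \<in> (undirected_edges F1)\<^sup>*" using assms by (simp add: p_def)
next
  assume "(x,y) \<in> (undirected_edges F1)\<^sup>*"
  then show "(x,y) \<in> (undirected_edges G)\<^sup>*"
    using rtrancl_mono[of "undirected_edges F1"] undirected_edges_glue by blast
qed

lemma glue_rtrancl_unglue:
  assumes "(x,y) \<in> (undirected_edges G)\<^sup>*"
  shows "(unglue_map (fst F1) l2 x, unglue_map (fst F1) l2 y) \<in> (undirected_edges F2)\<^sup>*"
proof (rule rtrancl_map[OF _ assms])
  have l1: "l1 < fst F1" using lgraph1 by (simp add: is_lgraph_def)
  fix u v assume "(u,v) \<in> undirected_edges G"
  then consider "(u,v) \<in> undirected_edges F1" | u' v' where "(u',v') \<in> undirected_edges F2" "u = g u'" "v = g v'"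
    using undirected_edges_glue by auto
  then show "(unglue_map (fst F1) l2 u, unglue_map (fst F1) l2 v) \<in> (undirected_edges F2)\<^sup>*"
  proof cases
    case 1
    then show ?thesis using undirected_edges_less[of F1] lgraph1 by (auto simp: unglue_map_def is_lgraph_def)
  qed (simp add: unglue_map_glue_map[OF l1])
qed

lemma glue_rtrancl_right:
  "(g u, g v) \<in> (undirected_edges G)\<^sup>* \<longleftrightarrow> (u,v) \<in> (undirected_edges F2)\<^sup>*"
proof
  have l1: "l1 < fst F1" using lgraph1 by (simp add: is_lgraph_def)
  assume "(g u, g v) \<in> (undirected_edges G)\<^sup>*"
  from glue_rtrancl_unglue[OF this] show "(u,v) \<in> (undirected_edges F2)\<^sup>*"
    by (simp add: unglue_map_glue_map[OF l1])
next
  assume "(u,v) \<in> (undirected_edges F2)\<^sup>*"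
  moreover have "(g x, g y) \<in> (undirected_edges G)\<^sup>*" if "(x,y) \<in> undirected_edges F2" for x y
    unfolding undirected_edges_glue
    by (intro r_into_rtrancl UnI2 image_eqI[where x="(x,y)"]) (simp_all add: that)
  ultimately show "(g u, g v) \<in> (undirected_edges G)\<^sup>*"
    using rtrancl_map[of "undirected_edges F2" g "undirected_edges G" u v] by blast
qed

lemma glue_vertices: "{0..<fst G} = {0..<fst F1} \<union> g ` {0..<fst F2}"
proof -
  have l1: "l1 < fst F1" and l2: "l2 < fst F2" using lgraph1 lgraph2 by (auto simp: is_lgraph_def)
  have "g ` ({0..<fst F2} - {l2}) = {fst F1..<fst F1 + fst F2 - 1}"
    using bij_betw_glue_map[OF l1 l2] by (simp add: bij_betw_def)
  moreover have "g l2 = l1" by (simp add: glue_map_def)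
  ultimately have "g ` {0..<fst F2} = insert l1 {fst F1..<fst F1 + fst F2 - 1}"
    using l2 by (metis Diff_empty Diff_insert0 atLeastLessThan_iff image_insert insert_Diff zero_le)
  then show ?thesis using l1 l2 by (auto simp: glue_Pair)
qed

lemma glue_map_less_fst: "u < fst F2 \<Longrightarrow> g u < fst G"
  using lgraph1 lgraph2 glue_map_less[of l1 "fst F1" u "fst F2" l2] by (simp add: is_lgraph_def glue_Pair)

lemma glue_common_component:
  assumes x: "x < fst F1" and v: "v < fst F2" and same: "conn_rel G `` {x} = conn_rel G `` {g v}"
  shows "conn_rel G `` {l1} = conn_rel G `` {g v}"
proof -
  have l1: "l1 < fst F1" and l2: "l2 < fst F2" using lgraph1 lgraph2 by (auto simp: is_lgraph_def)
  have "x < fst G" using x l2 by (simp add: glue_Pair)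
  then have "(x, g v) \<in> (undirected_edges G)\<^sup>*"
    using same glue_map_less_fst[OF v] by (simp add: conn_rel_Image_eq_iff)
  from glue_rtrancl_unglue[OF this] have "(l2, v) \<in> (undirected_edges F2)\<^sup>*"
    using x unglue_map_glue_map[OF l1, of l2 v] by (simp add: unglue_map_def[of _ _ x])
  then have "(g l2, g v) \<in> (undirected_edges G)\<^sup>*" by (simp only: glue_rtrancl_right)
  moreover have "g l2 = l1" by (simp add: glue_map_def)
  ultimately show ?thesis
    using glue_map_less_fst[OF v] glue_map_less_fst[OF l2] by (simp add: conn_rel_Image_eq_iff)
qed

lemma num_components_glue: "num_components G + 1 = num_components F1 + num_components F2"
proof -
  define cls where "cls = (\<lambda>x. conn_rel G `` {x})"
  have l1: "l1 < fst F1" and l2: "l2 < fst F2" using lgraph1 lgraph2 by (auto simp: is_lgraph_def)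
  have classes: "cls ` {0..<fst G} = cls ` {0..<fst F1} \<union> (cls \<circ> g) ` {0..<fst F2}"
    by (simp add: glue_vertices image_Un image_comp)
  have card1: "card (cls ` {0..<fst F1}) = num_components F1"
    unfolding num_components_eq_card_image
  proof (rule card_image_eq_if_same_fibres)
    fix x y assume "x \<in> {0..<fst F1}" "y \<in> {0..<fst F1}"
    moreover have "fst F1 \<le> fst G" using l2 by (simp add: glue_Pair)
    ultimately show "cls x = cls y \<longleftrightarrow> conn_rel F1 `` {x} = conn_rel F1 `` {y}"
      by (simp add: cls_def conn_rel_Image_eq_iff glue_rtrancl_left)
  qed
  have card2: "card ((cls \<circ> g) ` {0..<fst F2}) = num_components F2"
    unfolding num_components_eq_card_image
  proof (rule card_image_eq_if_same_fibres)
    fix x y assume "x \<in> {0..<fst F2}" "y \<in> {0..<fst F2}"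
    then show "(cls \<circ> g) x = (cls \<circ> g) y \<longleftrightarrow> conn_rel F2 `` {x} = conn_rel F2 `` {y}"
      using glue_map_less_fst by (simp add: cls_def conn_rel_Image_eq_iff glue_rtrancl_right)
  qed
  have common: "cls ` {0..<fst F1} \<inter> (cls \<circ> g) ` {0..<fst F2} = {cls l1}"
  proof (intro equalityI subsetI)
    fix z assume "z \<in> cls ` {0..<fst F1} \<inter> (cls \<circ> g) ` {0..<fst F2}"
    then obtain x v where "x < fst F1" "v < fst F2" "z = cls x" "z = cls (g v)" by auto
    then show "z \<in> {cls l1}" using glue_common_component unfolding cls_def by fastforce
  next
    have "g l2 = l1" by (simp add: glue_map_def)
    then show "z \<in> cls ` {0..<fst F1} \<inter> (cls \<circ> g) ` {0..<fst F2}" if "z \<in> {cls l1}" for z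
      using that l1 l2 by force
  qed
  have "card (cls ` {0..<fst F1}) + card ((cls \<circ> g) ` {0..<fst F2}) =
      card (cls ` {0..<fst F1} \<union> (cls \<circ> g) ` {0..<fst F2}) + card (cls ` {0..<fst F1} \<inter> (cls \<circ> g) ` {0..<fst F2})"
    by (rule card_Un_Int) auto
  then show ?thesis
    using card1 card2 classes common unfolding num_components_eq_card_image[of G] cls_def[symmetric]
    by simp
qed

end

lemma aut_group_less: "\<gamma> \<in> aut_group n a B \<Longrightarrow> x < n \<Longrightarrow> \<gamma> x < n"
  unfolding aut_group_def using permutes_in_image[of \<gamma> "{0..<n}" x] by auto

lemma id_in_aut_group: "id \<in> aut_group n a B"
  by (simp add: aut_group_def)

lemma aut_group_comp:
  assumes "\<gamma>1 \<in> aut_group n a B" "\<gamma>2 \<in> aut_group n a B"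
  shows "\<gamma>1 \<circ> \<gamma>2 \<in> aut_group n a B"
  using assms aut_group_less[OF assms(2)]
  by (auto simp: aut_group_def intro: permutes_compose)

lemma aut_group_inv:
  assumes "\<gamma> \<in> aut_group n a B"
  shows "inv \<gamma> \<in> aut_group n a B"
proof -
  have perm: "\<gamma> permutes {0..<n}" using assms by (simp add: aut_group_def)
  then have perm_inv: "inv \<gamma> permutes {0..<n}" by (rule permutes_inv)
  have less: "inv \<gamma> i < n" if "i < n" for i using permutes_in_image[OF perm_inv, of i] that by simp
  have "a (\<gamma> (inv \<gamma> i)) = a (inv \<gamma> i)" "B (\<gamma> (inv \<gamma> i)) (\<gamma> (inv \<gamma> j)) = B (inv \<gamma> i) (inv \<gamma> j)"
    if "i < n" "j < n" for i j
    using assms less that by (simp_all add: aut_group_def)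
  then show ?thesis using perm_inv by (simp add: aut_group_def permutes_inverses[OF perm])
qed

lemma aut_group_common_image:
  assumes "\<gamma>1 \<in> aut_group n a B" "\<gamma>2 \<in> aut_group n a B" "\<gamma>1 i = x" "\<gamma>2 j = x"
  shows "\<exists>\<gamma>\<in>aut_group n a B. \<gamma> i = j"
proof
  have "\<gamma>2 permutes {0..<n}" using assms(2) by (simp add: aut_group_def)
  then show "(inv \<gamma>2 \<circ> \<gamma>1) i = j" using permutes_inverses(2)[of \<gamma>2 _ j] assms(3,4) by simp
  show "inv \<gamma>2 \<circ> \<gamma>1 \<in> aut_group n a B" using assms(1,2) by (intro aut_group_comp aut_group_inv)
qed

lemma aut_group_common_source:
  assumes "\<gamma>1 \<in> aut_group n a B" "\<gamma>2 \<in> aut_group n a B" "\<gamma>1 x = i" "\<gamma>2 x = j"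
  shows "\<exists>\<gamma>\<in>aut_group n a B. \<gamma> i = j"
proof
  have "\<gamma>1 permutes {0..<n}" using assms(1) by (simp add: aut_group_def)
  then show "(\<gamma>2 \<circ> inv \<gamma>1) i = j" using permutes_inverses(2)[of \<gamma>1 _ x] assms(3,4) by simp
  show "\<gamma>2 \<circ> inv \<gamma>1 \<in> aut_group n a B" using assms(1,2) by (intro aut_group_comp aut_group_inv)
qed

lemma edge_weight_aut:
  assumes "\<gamma> \<in> aut_group n a B" "\<And>e. e \<in> set E \<Longrightarrow> \<phi> (fst e) < n \<and> \<phi> (snd e) < n"
  shows "edge_weight B E (\<gamma> \<circ> \<phi>) = edge_weight B E \<phi>"
  using assms(2) unfolding edge_weight_def
  by (induction E) (use assms(1) in \<open>simp_all add: aut_group_def\<close>)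

lemma partial_hom_aut:
  assumes aut: "\<gamma> \<in> aut_group n a B"
    and less: "\<And>e v. e \<in> set E \<Longrightarrow> v = fst e \<or> v = snd e \<Longrightarrow> v \<notin> X \<Longrightarrow> \<psi> v < n"
  shows "partial_hom n a B X E (\<gamma> \<circ> \<psi>) = partial_hom n a B X E \<psi>"
proof -
  have perm: "\<gamma> permutes {0..<n}" and a_eq: "\<And>i. i < n \<Longrightarrow> a (\<gamma> i) = a i"
    using aut by (auto simp: aut_group_def)
  have "partial_hom n a B X E \<psi> = partial_hom n a B X E (\<gamma> \<circ> \<psi>)"
    unfolding partial_hom_def
  proof (rule sum.reindex_bij_witness[of _ "\<lambda>\<chi>. restrict (inv \<gamma> \<circ> \<chi>) X" "\<lambda>\<chi>. restrict (\<gamma> \<circ> \<chi>) X"])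
    fix \<chi> assume \<chi>: "\<chi> \<in> X \<rightarrow>\<^sub>E {..<n}"
    show "restrict (inv \<gamma> \<circ> restrict (\<gamma> \<circ> \<chi>) X) X = \<chi>"
      by (rule ext) (simp add: PiE_arb[OF \<chi>] permutes_inverses[OF perm])
    show "restrict (\<gamma> \<circ> \<chi>) X \<in> X \<rightarrow>\<^sub>E {..<n}" using \<chi> aut_group_less[OF aut] by (auto simp: PiE_iff)
    have "(\<Prod>v\<in>X. a (restrict (\<gamma> \<circ> \<chi>) X v)) = (\<Prod>v\<in>X. a (\<chi> v))"
      using \<chi> a_eq by (intro prod.cong) (auto simp: PiE_iff)
    moreover have "edge_weight B E (override_on (\<gamma> \<circ> \<psi>) (restrict (\<gamma> \<circ> \<chi>) X) X) =
        edge_weight B E (\<gamma> \<circ> override_on \<psi> \<chi> X)"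
      by (rule edge_weight_cong) (simp add: override_on_def)
    moreover have "edge_weight B E (\<gamma> \<circ> override_on \<psi> \<chi> X) = edge_weight B E (override_on \<psi> \<chi> X)"
      by (rule edge_weight_aut[OF aut]) (use \<chi> less in \<open>auto simp: override_on_def PiE_iff\<close>)
    ultimately show "(\<Prod>v\<in>X. a (restrict (\<gamma> \<circ> \<chi>) X v)) * edge_weight B E (override_on (\<gamma> \<circ> \<psi>) (restrict (\<gamma> \<circ> \<chi>) X) X) =
        (\<Prod>v\<in>X. a (\<chi> v)) * edge_weight B E (override_on \<psi> \<chi> X)" by simp
  next
    fix \<chi> assume \<chi>: "\<chi> \<in> X \<rightarrow>\<^sub>E {..<n}"
    show "restrict (\<gamma> \<circ> restrict (inv \<gamma> \<circ> \<chi>) X) X = \<chi>"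
      by (rule ext) (simp add: PiE_arb[OF \<chi>] permutes_inverses[OF perm])
    show "restrict (inv \<gamma> \<circ> \<chi>) X \<in> X \<rightarrow>\<^sub>E {..<n}"
      using \<chi> aut_group_less[OF aut_group_inv[OF aut]] by (auto simp: PiE_iff)
  qed
  then show ?thesis by simp
qed

lemma rooted_hom_aut:
  assumes "\<gamma> \<in> aut_group n a B" "i < n"
  shows "rooted_hom n a B F l (\<gamma> i) = rooted_hom n a B F l i"
  using partial_hom_aut[OF assms(1), of "snd F" "{0..<fst F} - {l}" "\<lambda>_. i"] assms(2)
  by (simp add: rooted_hom_def o_def)

section \<open>Transitivity implies multiplicativity\<close>

definition multiplicative :: "nat \<Rightarrow> (nat \<Rightarrow> 'a::field) \<Rightarrow> (nat \<Rightarrow> nat \<Rightarrow> 'a) \<Rightarrow> bool" where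
  "multiplicative n a B \<longleftrightarrow> (\<forall>F1 F2. is_lgraph F1 \<longrightarrow> is_lgraph F2 \<longrightarrow>
      h_w (fst F1) n a B * h_w (fst F2) n a B = h_w (glue F1 F2) n a B)"

lemma h_w_glue_if_rooted_hom_constant:
  fixes a :: "nat \<Rightarrow> 'a::field"
  assumes lgraph1: "is_lgraph (F1, l1)" and lgraph2: "is_lgraph (F2, l2)" and S: "(\<Sum>i<n. a i) \<noteq> 0"
    and const1: "\<And>i. i < n \<Longrightarrow> rooted_hom n a B F1 l1 i = x1"
    and const2: "\<And>i. i < n \<Longrightarrow> rooted_hom n a B F2 l2 i = x2"
  shows "h_w F1 n a B * h_w F2 n a B = h_w (glue (F1, l1) (F2, l2)) n a B"
proof -
  define S where "S = (\<Sum>i<n. a i)"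
  have hom1: "hom_w F1 n a B = S * x1"
    unfolding hom_w_eq_sum_rooted_hom[OF lgraph1] S_def sum_distrib_right
    by (intro sum.cong) (simp_all add: const1)
  have hom2: "hom_w F2 n a B = S * x2"
    unfolding hom_w_eq_sum_rooted_hom[OF lgraph2] S_def sum_distrib_right
    by (intro sum.cong) (simp_all add: const2)
  have hom_glue: "hom_w (glue (F1, l1) (F2, l2)) n a B = S * (x1 * x2)"
    unfolding hom_w_glue[OF lgraph1 lgraph2] S_def sum_distrib_right
    by (intro sum.cong) (simp_all add: const1 const2)
  obtain c1 where c1: "num_components F1 = Suc c1"
    using num_components_pos[OF lgraph1] by (cases "num_components F1") auto
  obtain c2 where c2: "num_components F2 = Suc c2"
    using num_components_pos[OF lgraph2] by (cases "num_components F2") auto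
  have c_glue: "num_components (glue (F1, l1) (F2, l2)) = Suc (c1 + c2)"
    using num_components_glue[OF lgraph1 lgraph2] c1 c2 by simp
  have cancel: "S * x / S ^ Suc c = x / S ^ c" for x c
    using S by (simp add: S_def)
  show ?thesis
    unfolding h_w_def hom1 hom2 hom_glue c1 c2 c_glue S_def[symmetric] cancel
    by (simp add: power_add)
qed

lemma multiplicative_if_aut_transitive:
  fixes a :: "nat \<Rightarrow> 'a::field"
  assumes S: "(\<Sum>i<n. a i) \<noteq> 0" and transitive: "\<forall>i<n. \<forall>j<n. \<exists>\<gamma>\<in>aut_group n a B. \<gamma> i = j"
  shows "multiplicative n a B"
  unfolding multiplicative_def
proof (intro allI impI)
  fix FL1 FL2 :: lgraph assume lgraphs: "is_lgraph FL1" "is_lgraph FL2"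
  obtain F1 l1 F2 l2 where FL: "FL1 = (F1, l1)" "FL2 = (F2, l2)" by fastforce
  have const: "rooted_hom n a B F l i = rooted_hom n a B F l 0" if i: "i < n" for F l i
  proof -
    obtain \<gamma> where "\<gamma> \<in> aut_group n a B" "\<gamma> 0 = i" using transitive i by force
    then show ?thesis using rooted_hom_aut[of \<gamma> n a B 0 F l] i by auto
  qed
  show "h_w (fst FL1) n a B * h_w (fst FL2) n a B = h_w (glue FL1 FL2) n a B"
    using h_w_glue_if_rooted_hom_constant[OF _ _ S const const] lgraphs unfolding FL by simp
qed

section \<open>Quantum graphs\<close>

text \<open>Linear combinations of graphs on {0..<K} whose vertices 0, ..., k-1 are labelled, viewed as
  functions of the images \<psi> 0, ..., \<psi> (k-1) of the labels.\<close>
inductive_set quantum_graphs :: "nat \<Rightarrow> (nat \<Rightarrow> 'a::field) \<Rightarrow> (nat \<Rightarrow> nat \<Rightarrow> 'a) \<Rightarrow> nat \<Rightarrow>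
    ((nat \<Rightarrow> nat) \<Rightarrow> 'a) set"
  for n a B k where
  labelled_graph: "k \<le> K \<Longrightarrow> \<forall>e\<in>set E. fst e < K \<and> snd e < K \<Longrightarrow>
    partial_hom n a B {k..<K} E \<in> quantum_graphs n a B k"
| add: "f \<in> quantum_graphs n a B k \<Longrightarrow> g \<in> quantum_graphs n a B k \<Longrightarrow>
    (\<lambda>\<psi>. f \<psi> + g \<psi>) \<in> quantum_graphs n a B k"
| scale: "f \<in> quantum_graphs n a B k \<Longrightarrow> (\<lambda>\<psi>. c * f \<psi>) \<in> quantum_graphs n a B k"

lemma quantum_graphs_const: "(\<lambda>_. c) \<in> quantum_graphs n a B k"
proof -
  have "partial_hom n a B {k..<k} [] = (\<lambda>_. 1)" by (simp add: fun_eq_iff partial_hom_def edge_weight_def)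
  then show ?thesis using quantum_graphs.scale[OF quantum_graphs.labelled_graph[of k k "[]" n a B], of c] by simp
qed

lemma quantum_graphs_edge: "u < k \<Longrightarrow> v < k \<Longrightarrow> (\<lambda>\<psi>. B (\<psi> u) (\<psi> v)) \<in> quantum_graphs n a B k"
proof -
  assume "u < k" "v < k"
  moreover have "partial_hom n a B {k..<k} [(u,v)] = (\<lambda>\<psi>. B (\<psi> u) (\<psi> v))"
    by (simp add: fun_eq_iff partial_hom_def edge_weight_def)
  ultimately show ?thesis using quantum_graphs.labelled_graph[of k k "[(u,v)]" n a B] by simp
qed

lemma quantum_graphs_diff:
  "f \<in> quantum_graphs n a B k \<Longrightarrow> g \<in> quantum_graphs n a B k \<Longrightarrow> (\<lambda>\<psi>. f \<psi> - g \<psi>) \<in> quantum_graphs n a B k"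
  using quantum_graphs.add[of f n a B k "\<lambda>\<psi>. (-1) * g \<psi>"] quantum_graphs.scale[of g n a B k "-1"] by simp

text \<open>The product of two labelled graphs is the labelled graph obtained by identifying their labels.\<close>
lemma quantum_graphs_mult_labelled_graphs:
  assumes "k \<le> K1" "k \<le> K2" "\<forall>e\<in>set E1. fst e < K1 \<and> snd e < K1" "\<forall>e\<in>set E2. fst e < K2 \<and> snd e < K2"
  shows "(\<lambda>\<psi>. partial_hom n a B {k..<K1} E1 \<psi> * partial_hom n a B {k..<K2} E2 \<psi>) \<in> quantum_graphs n a B k"
proof -
  define shift where "shift = (\<lambda>v. if v < k then v else v + K1 - k)"
  define E where "E = E1 @ map (\<lambda>(u,v). (shift u, shift v)) E2"
  have "partial_hom n a B {k..<K1 + K2 - k} E = (\<lambda>\<psi>. partial_hom n a B {k..<K1} E1 \<psi> * partial_hom n a B {k..<K2} E2 \<psi>)"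
  proof
    fix \<psi>
    have split: "{k..<K1 + K2 - k} = {k..<K1} \<union> {K1..<K1 + K2 - k}" using assms(1,2) by auto
    have "partial_hom n a B {k..<K1 + K2 - k} E \<psi> =
        partial_hom n a B {k..<K1} E1 \<psi> * partial_hom n a B {K1..<K1 + K2 - k} (map (\<lambda>(u,v). (shift u, shift v)) E2) \<psi>"
      unfolding E_def split
    proof (rule partial_hom_disjoint_Un)
      fix e assume "e \<in> set E1"
      then show "fst e \<notin> {K1..<K1 + K2 - k} \<and> snd e \<notin> {K1..<K1 + K2 - k}" using assms(3) by auto
    next
      fix e assume "e \<in> set (map (\<lambda>(u,v). (shift u, shift v)) E2)"
      moreover have "shift w \<notin> {k..<K1}" for w using assms(1) by (auto simp: shift_def)
      ultimately show "fst e \<notin> {k..<K1} \<and> snd e \<notin> {k..<K1}" by auto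
    qed auto
    also have "partial_hom n a B {K1..<K1 + K2 - k} (map (\<lambda>(u,v). (shift u, shift v)) E2) \<psi> =
        partial_hom n a B {k..<K2} E2 (\<psi> \<circ> shift)"
    proof (rule partial_hom_rename)
      show "bij_betw shift {k..<K2} {K1..<K1 + K2 - k}"
        by (rule bij_betw_byWitness[where f'="\<lambda>x. x + k - K1"]) (use assms(1,2) in \<open>auto simp: shift_def\<close>)
      fix e v assume "e \<in> set E2" "v = fst e \<or> v = snd e" "shift v \<in> {K1..<K1 + K2 - k}"
      then show "v \<in> {k..<K2}" using assms(1,4) by (auto simp: shift_def split: if_splits)
    qed
    also have "\<dots> = partial_hom n a B {k..<K2} E2 \<psi>"
      by (rule partial_hom_cong) (use assms(4) in \<open>force simp: shift_def\<close>)
    finally show "partial_hom n a B {k..<K1 + K2 - k} E \<psi> = partial_hom n a B {k..<K1} E1 \<psi> * partial_hom n a B {k..<K2} E2 \<psi>" .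
  qed
  moreover have "partial_hom n a B {k..<K1 + K2 - k} E \<in> quantum_graphs n a B k"
    using assms unfolding E_def shift_def by (intro quantum_graphs.labelled_graph) force+
  ultimately show ?thesis by simp
qed

lemma quantum_graphs_mult:
  assumes "f \<in> quantum_graphs n a B k" "g \<in> quantum_graphs n a B k"
  shows "(\<lambda>\<psi>. f \<psi> * g \<psi>) \<in> quantum_graphs n a B k"
  using assms(1)
proof induction
  case (labelled_graph K1 E1)
  show ?case using assms(2)
  proof induction
    case (labelled_graph K2 E2)
    then show ?case using quantum_graphs_mult_labelled_graphs \<open>k \<le> K1\<close> \<open>\<forall>e\<in>set E1. fst e < K1 \<and> snd e < K1\<close>
      by blast
  next
    case (add g1 g2)
    then show ?case using quantum_graphs.add by (simp add: distrib_left)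
  next
    case (scale g c)
    then show ?case using quantum_graphs.scale[of _ n a B k c] by (simp add: mult.left_commute)
  qed
next
  case (add f1 f2)
  then show ?case using quantum_graphs.add by (simp add: distrib_right)
next
  case (scale f c)
  then show ?case using quantum_graphs.scale[of _ n a B k c] by (simp add: mult.assoc)
qed

lemma quantum_graphs_prod:
  assumes "finite I" "\<And>i. i \<in> I \<Longrightarrow> f i \<in> quantum_graphs n a B k"
  shows "(\<lambda>\<psi>. \<Prod>i\<in>I. f i \<psi>) \<in> quantum_graphs n a B k"
  using assms
proof (induction I rule: finite_induct)
  case empty
  then show ?case using quantum_graphs_const by simp
next
  case (insert x F)
  then show ?case using quantum_graphs_mult[of "f x" n a B k "\<lambda>\<psi>. \<Prod>i\<in>F. f i \<psi>"] by simp
qed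

definition lagrange_delta :: "'a::field set \<Rightarrow> 'a \<Rightarrow> 'a \<Rightarrow> 'a" where
  "lagrange_delta V c x = (\<Prod>v\<in>V - {c}. (x - v) / (c - v))"

lemma lagrange_delta_eq:
  assumes "finite V" "x \<in> V"
  shows "lagrange_delta V c x = (if x = c then 1 else 0)"
proof (cases "x = c")
  case False
  then show ?thesis using assms by (simp add: lagrange_delta_def) (intro prod_zero bexI[of _ x], auto)
next
  case True
  have "(c - v) / (c - v) = 1" if "v \<in> V - {c}" for v using that by auto
  then show ?thesis unfolding lagrange_delta_def True by (simp add: prod.neutral)
qed

lemma quantum_graphs_lagrange_delta:
  assumes "f \<in> quantum_graphs n a B k" "finite V"
  shows "(\<lambda>\<psi>. lagrange_delta V c (f \<psi>)) \<in> quantum_graphs n a B k"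
  unfolding lagrange_delta_def
proof (rule quantum_graphs_prod)
  fix v
  have affine: "(\<lambda>\<psi>. (f \<psi> - v) / (c - v)) = (\<lambda>\<psi>. (1 / (c - v)) * f \<psi> + (- v / (c - v)))"
    by (simp add: fun_eq_iff diff_divide_distrib)
  show "(\<lambda>\<psi>. (f \<psi> - v) / (c - v)) \<in> quantum_graphs n a B k"
    unfolding affine by (intro quantum_graphs.add quantum_graphs.scale assms(1) quantum_graphs_const)
qed (use assms(2) in simp)

definition unlabel :: "nat \<Rightarrow> (nat \<Rightarrow> 'a::comm_ring_1) \<Rightarrow> nat \<Rightarrow> nat \<Rightarrow> ((nat \<Rightarrow> nat) \<Rightarrow> 'a) \<Rightarrow> (nat \<Rightarrow> nat) \<Rightarrow> 'a" where
  "unlabel n a k m f \<psi> = (\<Sum>\<chi>\<in>{k..<m} \<rightarrow>\<^sub>E {..<n}. (\<Prod>u\<in>{k..<m}. a (\<chi> u)) * f (override_on \<psi> \<chi> {k..<m}))"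

lemma quantum_graphs_unlabel:
  assumes "k \<le> m" "f \<in> quantum_graphs n a B m"
  shows "unlabel n a k m f \<in> quantum_graphs n a B k"
  using assms(2)
proof induction
  case (labelled_graph K E)
  have "{k..<K} = {k..<m} \<union> {m..<K}" using labelled_graph assms(1) by auto
  then have "unlabel n a k m (partial_hom n a B {m..<K} E) = partial_hom n a B {k..<K} E"
    unfolding unlabel_def by (intro ext) (simp only: partial_hom_Un[symmetric] finite_atLeastLessThan ivl_disj_int_two(3))
  moreover have "partial_hom n a B {k..<K} E \<in> quantum_graphs n a B k"
    using labelled_graph assms(1) by (intro quantum_graphs.labelled_graph) auto
  ultimately show ?case by simp
next
  case (add f g)
  have "unlabel n a k m (\<lambda>\<psi>. f \<psi> + g \<psi>) = (\<lambda>\<psi>. unlabel n a k m f \<psi> + unlabel n a k m g \<psi>)"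
    unfolding unlabel_def by (simp add: fun_eq_iff distrib_left sum.distrib)
  then show ?case using quantum_graphs.add[OF add.IH] by simp
next
  case (scale f c)
  have "unlabel n a k m (\<lambda>\<psi>. c * f \<psi>) = (\<lambda>\<psi>. c * unlabel n a k m f \<psi>)"
    unfolding unlabel_def by (simp add: fun_eq_iff sum_distrib_left mult.left_commute)
  then show ?case using quantum_graphs.scale[OF scale.IH] by simp
qed

lemma unlabel_Suc: "unlabel n a k (Suc k) f \<psi> = (\<Sum>w<n. a w * f (\<psi>(k := w)))"
proof -
  have "override_on \<psi> \<chi> {k} = \<psi>(k := \<chi> k)" for \<chi> by (simp add: override_on_def fun_eq_iff)
  then have "unlabel n a k (Suc k) f \<psi> = (\<Sum>\<chi>\<in>{k} \<rightarrow>\<^sub>E {..<n}. a (\<chi> k) * f (\<psi>(k := \<chi> k)))"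
    by (simp add: unlabel_def)
  also have "\<dots> = (\<Sum>w<n. a w * f (\<psi>(k := w)))" by (rule sum_PiE_singleton)
  finally show ?thesis .
qed

section \<open>Indicators of automorphism orbits\<close>

locale reference_labelling =
  fixes n :: nat and a :: "nat \<Rightarrow> 'a::field_char_0" and B :: "nat \<Rightarrow> nat \<Rightarrow> 'a" and \<tau> :: "nat \<Rightarrow> nat"
  assumes n_pos: "n \<ge> 1" and a_nonzero: "\<forall>i<n. a i \<noteq> 0" and B_sym: "\<forall>i<n. \<forall>j<n. B i j = B j i"
    and twin_free: "twin_free n B" and bij_\<tau>: "bij_betw \<tau> {..<n} {..<n}"
begin

definition separator :: "nat \<Rightarrow> nat \<Rightarrow> nat" where
  "separator p q = (SOME r. r < n \<and> B (\<tau> r) (\<tau> p) \<noteq> B (\<tau> r) (\<tau> q))"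

lemma \<tau>_less: "u < n \<Longrightarrow> \<tau> u < n"
  using bij_\<tau> by (auto simp: bij_betw_def)

lemma separator:
  assumes "p < n" "q < n" "p \<noteq> q"
  shows "separator p q < n" "B (\<tau> (separator p q)) (\<tau> p) \<noteq> B (\<tau> (separator p q)) (\<tau> q)"
proof -
  have "\<tau> p < n" "\<tau> q < n" "\<tau> p \<noteq> \<tau> q" using bij_\<tau> assms by (auto simp: bij_betw_def inj_on_def)
  then obtain k where k: "k < n" "B (\<tau> p) k \<noteq> B (\<tau> q) k" using twin_free unfolding twin_free_def by blast
  moreover have "k \<in> \<tau> ` {..<n}" using bij_\<tau> k(1) by (simp add: bij_betw_def)
  then obtain r where "r < n" "\<tau> r = k" by auto
  then have "\<exists>r. r < n \<and> B (\<tau> r) (\<tau> p) \<noteq> B (\<tau> r) (\<tau> q)"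
    using B_sym k \<open>\<tau> p < n\<close> \<open>\<tau> q < n\<close> by metis
  then show "separator p q < n" "B (\<tau> (separator p q)) (\<tau> p) \<noteq> B (\<tau> (separator p q)) (\<tau> q)"
    unfolding separator_def by (metis (mono_tags, lifting) someI_ex)+
qed

text \<open>When \<psi> is a bijection of [n], only the term w = \<psi> p survives (every other w is some \<psi> q,
  which kills the factor for q), so the test reads off the weight a (\<psi> p).\<close>
definition vertex_test :: "nat \<Rightarrow> (nat \<Rightarrow> nat) \<Rightarrow> 'a" where
  "vertex_test p \<psi> = (\<Sum>w<n. a w * (\<Prod>q\<in>{..<n} - {p}. B (\<psi> (separator p q)) w - B (\<psi> (separator p q)) (\<psi> q)))"

definition tests :: "((nat \<times> nat) + nat) set" where
  "tests = ({..<n} \<times> {..<n}) <+> {..<n}"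

definition type_test :: "(nat \<times> nat) + nat \<Rightarrow> (nat \<Rightarrow> nat) \<Rightarrow> 'a" where
  "type_test t \<psi> = (case t of Inl (u, v) \<Rightarrow> B (\<psi> u) (\<psi> v) | Inr p \<Rightarrow> vertex_test p \<psi>)"

definition same_type :: "(nat \<Rightarrow> nat) \<Rightarrow> bool" where
  "same_type \<psi> \<longleftrightarrow> (\<forall>t\<in>tests. type_test t \<psi> = type_test t \<tau>)"

lemma finite_tests: "finite tests"
  by (simp add: tests_def)

lemma vertex_test_in_quantum_graphs:
  assumes p: "p < n"
  shows "vertex_test p \<in> quantum_graphs n a B n"
proof -
  define f where "f = (\<lambda>\<psi>. \<Prod>q\<in>{..<n} - {p}. B (\<psi> (separator p q)) (\<psi> n) - B (\<psi> (separator p q)) (\<psi> q))"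
  have separator_ne: "separator p q \<noteq> n" if "q \<in> {..<n} - {p}" for q
    using separator(1)[OF p, of q] that by auto
  have "f \<in> quantum_graphs n a B (Suc n)"
    unfolding f_def
    by (intro quantum_graphs_prod quantum_graphs_diff quantum_graphs_edge)
      (auto simp: less_Suc_eq separator(1)[OF p])
  then have "unlabel n a n (Suc n) f \<in> quantum_graphs n a B n" by (intro quantum_graphs_unlabel) auto
  moreover have "unlabel n a n (Suc n) f = vertex_test p"
  proof
    fix \<psi>
    have "f (\<psi>(n := w)) = (\<Prod>q\<in>{..<n} - {p}. B (\<psi> (separator p q)) w - B (\<psi> (separator p q)) (\<psi> q))" for w
      unfolding f_def using separator_ne by (intro prod.cong) auto
    then show "unlabel n a n (Suc n) f \<psi> = vertex_test p \<psi>" by (simp add: unlabel_Suc vertex_test_def)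
  qed
  ultimately show ?thesis by simp
qed

lemma type_test_Inl: "type_test (Inl (u, v)) = (\<lambda>\<psi>. B (\<psi> u) (\<psi> v))"
  by (simp add: fun_eq_iff type_test_def)

lemma type_test_Inr: "type_test (Inr p) = vertex_test p"
  by (simp add: fun_eq_iff type_test_def)

lemma type_test_in_quantum_graphs: "t \<in> tests \<Longrightarrow> type_test t \<in> quantum_graphs n a B n"
  by (auto simp: tests_def type_test_Inl type_test_Inr quantum_graphs_edge vertex_test_in_quantum_graphs)

lemma type_test_cong:
  assumes "t \<in> tests" "\<And>u. u < n \<Longrightarrow> \<psi> u = \<psi>' u"
  shows "type_test t \<psi> = type_test t \<psi>'"
proof -
  have "vertex_test p \<psi> = vertex_test p \<psi>'" if p: "p < n" for p
    unfolding vertex_test_def using assms(2) separator(1)[OF p] by (intro sum.cong prod.cong arg_cong2[where f=times]) auto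
  then show ?thesis using assms by (auto simp: tests_def type_test_def)
qed

lemma vertex_test_bij:
  assumes bij: "bij_betw \<psi> {..<n} {..<n}" and p: "p < n"
  shows "vertex_test p \<psi> =
    a (\<psi> p) * (\<Prod>q\<in>{..<n} - {p}. B (\<psi> (separator p q)) (\<psi> p) - B (\<psi> (separator p q)) (\<psi> q))"
proof -
  define summand where "summand = (\<lambda>w. a w * (\<Prod>q\<in>{..<n} - {p}. B (\<psi> (separator p q)) w - B (\<psi> (separator p q)) (\<psi> q)))"
  have "summand w = 0" if w: "w \<in> {..<n} - {\<psi> p}" for w
  proof -
    have "w \<in> \<psi> ` {..<n}" using w bij by (simp add: bij_betw_def)
    then obtain q where "q < n" "\<psi> q = w" by auto
    then show ?thesis using w unfolding summand_def by (intro mult_zero_right[THEN subst] prod_zero) auto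
  qed
  moreover have "\<psi> p \<in> {..<n}" using bij p by (auto simp: bij_betw_def)
  ultimately have "sum summand {..<n} = summand (\<psi> p)"
    by (simp add: sum.remove)
  then show ?thesis by (simp add: vertex_test_def summand_def)
qed

lemma vertex_test_factor_nonzero:
  "p < n \<Longrightarrow> (\<Prod>q\<in>{..<n} - {p}. B (\<tau> (separator p q)) (\<tau> p) - B (\<tau> (separator p q)) (\<tau> q)) \<noteq> 0"
  using separator(2) by (auto simp: prod_zero_iff)

lemma same_type_edge:
  assumes "same_type \<psi>" "u < n" "v < n"
  shows "B (\<psi> u) (\<psi> v) = B (\<tau> u) (\<tau> v)"
proof -
  have "Inl (u, v) \<in> tests" using assms(2,3) by (auto simp: tests_def)
  then have "type_test (Inl (u, v)) \<psi> = type_test (Inl (u, v)) \<tau>" using assms(1) by (simp add: same_type_def)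
  then show ?thesis by (simp add: type_test_Inl)
qed

lemma same_type_weight:
  assumes same: "same_type \<psi>" and bij: "bij_betw \<psi> {..<n} {..<n}" and p: "p < n"
  shows "a (\<psi> p) = a (\<tau> p)"
proof -
  have "Inr p \<in> tests" using p by (auto simp: tests_def)
  then have "type_test (Inr p) \<psi> = type_test (Inr p) \<tau>" using same by (simp add: same_type_def)
  then have "vertex_test p \<psi> = vertex_test p \<tau>" by (simp add: type_test_Inr)
  moreover have "(\<Prod>q\<in>{..<n} - {p}. B (\<psi> (separator p q)) (\<psi> p) - B (\<psi> (separator p q)) (\<psi> q)) =
      (\<Prod>q\<in>{..<n} - {p}. B (\<tau> (separator p q)) (\<tau> p) - B (\<tau> (separator p q)) (\<tau> q))"
    using separator(1)[OF p] p by (intro prod.cong) (auto simp: same_type_edge[OF same])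
  ultimately show ?thesis
    using vertex_test_bij[OF bij p] vertex_test_bij[OF bij_\<tau> p] vertex_test_factor_nonzero[OF p] by simp
qed

lemma same_type_if_aut:
  assumes aut: "\<gamma> \<in> aut_group n a B" and \<psi>: "\<And>u. u < n \<Longrightarrow> \<psi> u = \<gamma> (\<tau> u)"
  shows "same_type \<psi>"
proof -
  have B_eq: "B (\<psi> u) (\<psi> v) = B (\<tau> u) (\<tau> v)" if "u < n" "v < n" for u v
    using aut that \<tau>_less by (simp add: \<psi> aut_group_def)
  have "bij_betw \<gamma> {..<n} {..<n}"
    using aut permutes_imp_bij by (fastforce simp: aut_group_def atLeast0LessThan)
  then have "bij_betw (\<gamma> \<circ> \<tau>) {..<n} {..<n}" using bij_\<tau> by (intro bij_betw_trans)
  then have bij: "bij_betw \<psi> {..<n} {..<n}" by (rule bij_betw_cong[THEN iffD1, rotated]) (simp add: \<psi>)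
  have "vertex_test p \<psi> = vertex_test p \<tau>" if p: "p < n" for p
  proof -
    have "a (\<psi> p) = a (\<tau> p)" using aut p \<tau>_less by (simp add: \<psi> aut_group_def)
    moreover have "(\<Prod>q\<in>{..<n} - {p}. B (\<psi> (separator p q)) (\<psi> p) - B (\<psi> (separator p q)) (\<psi> q)) =
        (\<Prod>q\<in>{..<n} - {p}. B (\<tau> (separator p q)) (\<tau> p) - B (\<tau> (separator p q)) (\<tau> q))"
      using separator(1)[OF p] p by (intro prod.cong) (auto simp: B_eq)
    ultimately show ?thesis using vertex_test_bij[OF bij p] vertex_test_bij[OF bij_\<tau> p] by simp
  qed
  then show ?thesis by (auto simp: same_type_def tests_def type_test_Inl type_test_Inr B_eq)
qed

lemma bij_if_same_type:
  assumes same: "same_type \<psi>" and less: "\<And>u. u < n \<Longrightarrow> \<psi> u < n"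
  shows "bij_betw \<psi> {..<n} {..<n}"
proof -
  have "inj_on \<psi> {..<n}"
  proof (rule inj_onI, rule ccontr)
    fix p q assume pq: "p \<in> {..<n}" "q \<in> {..<n}" "\<psi> p = \<psi> q" "p \<noteq> q"
    then have "B (\<tau> (separator p q)) (\<tau> p) = B (\<tau> (separator p q)) (\<tau> q)"
      using same_type_edge[OF same] separator(1)[of p q] by (metis lessThan_iff)
    then show False using separator(2)[of p q] pq by auto
  qed
  moreover have "\<psi> ` {..<n} = {..<n}"
    using less card_image[OF \<open>inj_on \<psi> {..<n}\<close>] by (intro card_subset_eq) auto
  ultimately show ?thesis by (simp add: bij_betw_def)
qed

lemma aut_if_same_type:
  assumes same: "same_type \<psi>" and less: "\<And>u. u < n \<Longrightarrow> \<psi> u < n"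
  shows "\<exists>\<gamma>\<in>aut_group n a B. \<forall>u<n. \<psi> u = \<gamma> (\<tau> u)"
proof -
  have bij: "bij_betw \<psi> {..<n} {..<n}" using same less by (rule bij_if_same_type)
  define \<tau>' where "\<tau>' = inv_into {..<n} \<tau>"
  have bij_\<tau>': "bij_betw \<tau>' {..<n} {..<n}" unfolding \<tau>'_def using bij_\<tau> by (rule bij_betw_inv_into)
  have \<tau>_\<tau>': "\<tau> (\<tau>' x) = x" if "x < n" for x
    using bij_\<tau> that unfolding \<tau>'_def by (simp add: bij_betw_inv_into_right)
  have \<tau>'_\<tau>: "\<tau>' (\<tau> u) = u" if "u < n" for u
    using bij_\<tau> that unfolding \<tau>'_def by (simp add: bij_betw_inv_into_left)
  have \<tau>'_less: "\<tau>' x < n" if "x < n" for x using bij_\<tau>' that by (auto simp: bij_betw_def)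
  define \<gamma> where "\<gamma> = (\<lambda>v. if v < n then \<psi> (\<tau>' v) else v)"
  have "bij_betw (\<psi> \<circ> \<tau>') {..<n} {..<n}" using bij_\<tau>' bij by (rule bij_betw_trans)
  moreover have "(\<psi> \<circ> \<tau>') v = \<gamma> v" if "v \<in> {..<n}" for v using that by (simp add: \<gamma>_def)
  ultimately have "bij_betw \<gamma> {..<n} {..<n}" using bij_betw_cong by blast
  then have "\<gamma> permutes {0..<n}" by (intro bij_imp_permutes) (auto simp: \<gamma>_def atLeast0LessThan)
  moreover have "B (\<gamma> x) (\<gamma> y) = B x y" if "x < n" "y < n" for x y
    using same_type_edge[OF same \<tau>'_less \<tau>'_less] that by (simp add: \<gamma>_def \<tau>_\<tau>')
  moreover have "a (\<gamma> x) = a x" if "x < n" for x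
    using same_type_weight[OF same bij \<tau>'_less[OF that]] that by (simp add: \<gamma>_def \<tau>_\<tau>')
  moreover have "\<psi> u = \<gamma> (\<tau> u)" if "u < n" for u
    using that \<tau>_less by (simp add: \<gamma>_def \<tau>'_\<tau>)
  ultimately show ?thesis by (auto simp: aut_group_def)
qed

definition type_indicator :: "(nat \<Rightarrow> nat) \<Rightarrow> 'a" where
  "type_indicator \<psi> =
    (\<Prod>t\<in>tests. lagrange_delta (type_test t ` ({..<n} \<rightarrow>\<^sub>E {..<n})) (type_test t \<tau>) (type_test t \<psi>))"

lemma type_indicator_in_quantum_graphs: "type_indicator \<in> quantum_graphs n a B n"
proof -
  have "(\<lambda>\<psi>. type_indicator \<psi>) \<in> quantum_graphs n a B n"
    unfolding type_indicator_def
    by (intro quantum_graphs_prod quantum_graphs_lagrange_delta type_test_in_quantum_graphs finite_tests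
        finite_imageI finite_PiE) auto
  then show ?thesis by simp
qed

lemma type_indicator_eq:
  assumes less: "\<And>u. u < n \<Longrightarrow> \<psi> u < n"
  shows "type_indicator \<psi> = (if same_type \<psi> then 1 else 0)"
proof -
  have "lagrange_delta (type_test t ` ({..<n} \<rightarrow>\<^sub>E {..<n})) (type_test t \<tau>) (type_test t \<psi>) =
      (if type_test t \<psi> = type_test t \<tau> then 1 else 0)" if t: "t \<in> tests" for t
  proof (rule lagrange_delta_eq)
    have "restrict \<psi> {..<n} \<in> {..<n} \<rightarrow>\<^sub>E {..<n}" using less by auto
    moreover have "type_test t \<psi> = type_test t (restrict \<psi> {..<n})" using t by (intro type_test_cong) auto
    ultimately show "type_test t \<psi> \<in> type_test t ` ({..<n} \<rightarrow>\<^sub>E {..<n})" by blast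
  qed (intro finite_imageI finite_PiE; simp)
  then show ?thesis
    unfolding type_indicator_def same_type_def using finite_tests
    by (auto intro: prod_zero)
qed

definition orbit_count :: "(nat \<Rightarrow> nat) \<Rightarrow> 'a" where
  "orbit_count = unlabel n a 1 n type_indicator"

lemma orbit_count_in_quantum_graphs: "orbit_count \<in> quantum_graphs n a B 1"
  unfolding orbit_count_def using n_pos type_indicator_in_quantum_graphs by (rule quantum_graphs_unlabel)

lemma orbit_count_const:
  assumes x: "x < n"
  shows "orbit_count (\<lambda>_. x) =
    of_nat (card {\<chi> \<in> {1..<n} \<rightarrow>\<^sub>E {..<n}. same_type (override_on (\<lambda>_. x) \<chi> {1..<n})}) * (\<Prod>u\<in>{1..<n}. a (\<tau> u))"
proof -
  define P where "P = {1..<n} \<rightarrow>\<^sub>E {..<n}"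
  define ext where "ext = (\<lambda>\<chi>. override_on (\<lambda>_. x) \<chi> {1..<n})"
  have ext_less: "ext \<chi> u < n" if "\<chi> \<in> P" "u < n" for \<chi> u
    using that x by (auto simp: ext_def override_on_def P_def PiE_iff)
  have "(\<Prod>u\<in>{1..<n}. a (\<chi> u)) * type_indicator (ext \<chi>) =
      (if same_type (ext \<chi>) then (\<Prod>u\<in>{1..<n}. a (\<tau> u)) else 0)" if \<chi>: "\<chi> \<in> P" for \<chi>
  proof (cases "same_type (ext \<chi>)")
    case True
    then obtain \<gamma> where \<gamma>: "\<gamma> \<in> aut_group n a B" "\<forall>u<n. ext \<chi> u = \<gamma> (\<tau> u)"
      using aut_if_same_type ext_less[OF \<chi>] by blast
    have "a (\<chi> u) = a (\<tau> u)" if "u \<in> {1..<n}" for u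
      using \<gamma> that \<tau>_less by (auto simp: ext_def aut_group_def)
    then show ?thesis using True type_indicator_eq[OF ext_less[OF \<chi>]] by simp
  qed (simp add: type_indicator_eq[OF ext_less[OF \<chi>]])
  then have "orbit_count (\<lambda>_. x) = (\<Sum>\<chi>\<in>P. if same_type (ext \<chi>) then (\<Prod>u\<in>{1..<n}. a (\<tau> u)) else 0)"
    by (simp add: orbit_count_def unlabel_def P_def ext_def)
  also have "\<dots> = of_nat (card {\<chi> \<in> P. same_type (ext \<chi>)}) * (\<Prod>u\<in>{1..<n}. a (\<tau> u))"
    by (simp add: sum.If_cases P_def finite_PiE Int_def)
  finally show ?thesis by (simp add: P_def ext_def)
qed

lemma orbit_count_nonzero_iff:
  assumes x: "x < n"
  shows "orbit_count (\<lambda>_. x) \<noteq> 0 \<longleftrightarrow> (\<exists>\<gamma>\<in>aut_group n a B. \<gamma> (\<tau> 0) = x)"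
proof -
  define ext where "ext = (\<lambda>\<chi>. override_on (\<lambda>_. x) \<chi> {1..<n})"
  have "(\<Prod>u\<in>{1..<n}. a (\<tau> u)) \<noteq> 0" using a_nonzero \<tau>_less by simp
  then have "orbit_count (\<lambda>_. x) \<noteq> 0 \<longleftrightarrow> (\<exists>\<chi>\<in>{1..<n} \<rightarrow>\<^sub>E {..<n}. same_type (ext \<chi>))"
    by (simp add: orbit_count_const[OF x] finite_PiE ext_def Bex_def)
  also have "\<dots> \<longleftrightarrow> (\<exists>\<gamma>\<in>aut_group n a B. \<gamma> (\<tau> 0) = x)"
  proof
    assume "\<exists>\<chi>\<in>{1..<n} \<rightarrow>\<^sub>E {..<n}. same_type (ext \<chi>)"
    then obtain \<chi> where "\<chi> \<in> {1..<n} \<rightarrow>\<^sub>E {..<n}" "same_type (ext \<chi>)" by blast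
    moreover have "ext \<chi> u < n" if "\<chi> \<in> {1..<n} \<rightarrow>\<^sub>E {..<n}" "u < n" for u
      using that x by (auto simp: ext_def override_on_def PiE_iff)
    ultimately obtain \<gamma> where "\<gamma> \<in> aut_group n a B" "\<forall>u<n. ext \<chi> u = \<gamma> (\<tau> u)"
      using aut_if_same_type by blast
    then show "\<exists>\<gamma>\<in>aut_group n a B. \<gamma> (\<tau> 0) = x" using n_pos by (force simp: ext_def)
  next
    assume "\<exists>\<gamma>\<in>aut_group n a B. \<gamma> (\<tau> 0) = x"
    then obtain \<gamma> where \<gamma>: "\<gamma> \<in> aut_group n a B" "\<gamma> (\<tau> 0) = x" by blast
    define \<chi> where "\<chi> = restrict (\<gamma> \<circ> \<tau>) {1..<n}"
    have "\<chi> \<in> {1..<n} \<rightarrow>\<^sub>E {..<n}" unfolding \<chi>_def using aut_group_less[OF \<gamma>(1)] \<tau>_less by auto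
    moreover have "ext \<chi> u = \<gamma> (\<tau> u)" if "u < n" for u
      using that \<gamma>(2) by (cases "u = 0") (auto simp: ext_def \<chi>_def)
    then have "same_type (ext \<chi>)" using same_type_if_aut[OF \<gamma>(1)] by blast
    ultimately show "\<exists>\<chi>\<in>{1..<n} \<rightarrow>\<^sub>E {..<n}. same_type (ext \<chi>)" by blast
  qed
  finally show ?thesis .
qed

end

lemma orbit_indicator_in_quantum_graphs:
  fixes a :: "nat \<Rightarrow> 'a::field_char_0"
  assumes "n \<ge> 1" "\<forall>i<n. a i \<noteq> 0" "\<forall>i<n. \<forall>j<n. B i j = B j i" "twin_free n B" and j: "j < n"
  shows "\<exists>I\<in>quantum_graphs n a B 1. \<forall>x<n. I (\<lambda>_. x) = (if \<exists>\<gamma>\<in>aut_group n a B. \<gamma> j = x then 1 else 0)"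
proof -
  define \<tau> where "\<tau> = Transposition.transpose 0 j"
  have "\<tau> permutes {..<n}" unfolding \<tau>_def using assms(1) j by (intro permutes_swap_id) auto
  then have "bij_betw \<tau> {..<n} {..<n}" by (rule permutes_imp_bij)
  then interpret reference_labelling n a B \<tau> using assms(1-4) by unfold_locales
  have \<tau>_0: "\<tau> 0 = j" by (simp add: \<tau>_def)
  define W where "W = (\<lambda>x. orbit_count (\<lambda>_. x)) ` {..<n}"
  define I where "I = (\<lambda>\<psi>. 1 - lagrange_delta W 0 (orbit_count \<psi>))"
  have "I \<in> quantum_graphs n a B 1"
    unfolding I_def W_def
    by (intro quantum_graphs_diff quantum_graphs_const quantum_graphs_lagrange_delta orbit_count_in_quantum_graphs) simp
  moreover have "I (\<lambda>_. x) = (if \<exists>\<gamma>\<in>aut_group n a B. \<gamma> j = x then 1 else 0)" if x: "x < n" for x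
    using lagrange_delta_eq[of W "orbit_count (\<lambda>_. x)" 0] orbit_count_nonzero_iff[OF x] x
    by (auto simp: I_def W_def \<tau>_0)
  ultimately show ?thesis by blast
qed

section \<open>Multiplicativity implies transitivity\<close>

definition root_sum :: "nat \<Rightarrow> (nat \<Rightarrow> 'a::comm_ring_1) \<Rightarrow> ((nat \<Rightarrow> nat) \<Rightarrow> 'a) \<Rightarrow> 'a" where
  "root_sum n a f = (\<Sum>i<n. a i * f (\<lambda>_. i))"

lemma root_sum_add: "root_sum n a (\<lambda>\<psi>. f \<psi> + g \<psi>) = root_sum n a f + root_sum n a g"
  by (simp add: root_sum_def distrib_left sum.distrib)

lemma root_sum_scale: "root_sum n a (\<lambda>\<psi>. c * f \<psi>) = c * root_sum n a f"
  by (simp add: root_sum_def sum_distrib_left mult.left_commute)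

lemma multiplicative_hom_w:
  fixes a :: "nat \<Rightarrow> 'a::field"
  assumes "multiplicative n a B" and S: "(\<Sum>i<n. a i) \<noteq> 0"
    and lgraph1: "is_lgraph (F1, l1)" and lgraph2: "is_lgraph (F2, l2)"
  shows "hom_w F1 n a B * hom_w F2 n a B = (\<Sum>i<n. a i) * hom_w (glue (F1, l1) (F2, l2)) n a B"
proof -
  define S where "S = (\<Sum>i<n. a i)"
  obtain c1 where c1: "num_components F1 = Suc c1"
    using num_components_pos[OF lgraph1] by (cases "num_components F1") auto
  obtain c2 where c2: "num_components F2 = Suc c2"
    using num_components_pos[OF lgraph2] by (cases "num_components F2") auto
  have "num_components (glue (F1, l1) (F2, l2)) = Suc (c1 + c2)"
    using num_components_glue[OF lgraph1 lgraph2] c1 c2 by simp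
  moreover have "h_w F1 n a B * h_w F2 n a B = h_w (glue (F1, l1) (F2, l2)) n a B"
    using assms lgraph1 lgraph2 unfolding multiplicative_def by (metis fst_conv)
  ultimately have "hom_w F1 n a B / S ^ Suc c1 * (hom_w F2 n a B / S ^ Suc c2) =
      hom_w (glue (F1, l1) (F2, l2)) n a B / S ^ Suc (c1 + c2)"
    by (simp add: h_w_def c1 c2 S_def)
  then show ?thesis using S by (simp add: S_def[symmetric] field_simps power_add)
qed

lemma multiplicative_labelled_graphs:
  fixes a :: "nat \<Rightarrow> 'a::field"
  assumes mult: "multiplicative n a B" and S: "(\<Sum>i<n. a i) \<noteq> 0"
    and graph1: "1 \<le> K1" "\<forall>e\<in>set E1. fst e < K1 \<and> snd e < K1"
    and graph2: "1 \<le> K2" "\<forall>e\<in>set E2. fst e < K2 \<and> snd e < K2"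
  shows "(\<Sum>i<n. a i) * root_sum n a (\<lambda>\<psi>. partial_hom n a B {1..<K1} E1 \<psi> * partial_hom n a B {1..<K2} E2 \<psi>) =
    root_sum n a (partial_hom n a B {1..<K1} E1) * root_sum n a (partial_hom n a B {1..<K2} E2)"
proof -
  have lgraph1: "is_lgraph ((K1, E1), 0)" using graph1 by (force simp: is_lgraph_def wf_graph_def)
  have lgraph2: "is_lgraph ((K2, E2), 0)" using graph2 by (force simp: is_lgraph_def wf_graph_def)
  have "{0..<K} - {0} = {1..<K}" for K :: nat by auto
  then have rooted: "rooted_hom n a B (K, E) 0 i = partial_hom n a B {1..<K} E (\<lambda>_. i)" for K E i
    by (simp add: rooted_hom_def)
  show ?thesis
    using multiplicative_hom_w[OF mult S lgraph1 lgraph2]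
    by (simp add: hom_w_eq_sum_rooted_hom[OF lgraph1] hom_w_eq_sum_rooted_hom[OF lgraph2]
        hom_w_glue[OF lgraph1 lgraph2] rooted root_sum_def)
qed

lemma multiplicative_quantum_graphs:
  fixes a :: "nat \<Rightarrow> 'a::field"
  assumes mult: "multiplicative n a B" and S: "(\<Sum>i<n. a i) \<noteq> 0"
    and "f \<in> quantum_graphs n a B 1" "g \<in> quantum_graphs n a B 1"
  shows "(\<Sum>i<n. a i) * root_sum n a (\<lambda>\<psi>. f \<psi> * g \<psi>) = root_sum n a f * root_sum n a g"
  using assms(3)
proof induction
  case (labelled_graph K1 E1)
  show ?case using assms(4)
  proof induction
    case (labelled_graph K2 E2)
    then show ?case
      using multiplicative_labelled_graphs[OF mult S] \<open>1 \<le> K1\<close> \<open>\<forall>e\<in>set E1. fst e < K1 \<and> snd e < K1\<close>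
      by blast
  next
    case (add g1 g2)
    have "(\<lambda>\<psi>. f \<psi> * (g1 \<psi> + g2 \<psi>)) = (\<lambda>\<psi>. f \<psi> * g1 \<psi> + f \<psi> * g2 \<psi>)" for f :: "(nat \<Rightarrow> nat) \<Rightarrow> 'a"
      by (simp add: fun_eq_iff distrib_left)
    then show ?case using add.IH by (simp add: root_sum_add distrib_left)
  next
    case (scale g c)
    have "(\<lambda>\<psi>. f \<psi> * (c * g \<psi>)) = (\<lambda>\<psi>. c * (f \<psi> * g \<psi>))" for f :: "(nat \<Rightarrow> nat) \<Rightarrow> 'a"
      by (simp add: fun_eq_iff mult.left_commute)
    then show ?case using scale.IH by (simp add: root_sum_scale mult.left_commute)
  qed
next
  case (add f1 f2)
  have "(\<lambda>\<psi>. (f1 \<psi> + f2 \<psi>) * g \<psi>) = (\<lambda>\<psi>. f1 \<psi> * g \<psi> + f2 \<psi> * g \<psi>)"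
    by (simp add: fun_eq_iff distrib_right)
  then show ?case using add.IH by (simp add: root_sum_add distrib_left distrib_right)
next
  case (scale f c)
  have "(\<lambda>\<psi>. c * f \<psi> * g \<psi>) = (\<lambda>\<psi>. c * (f \<psi> * g \<psi>))"
    by (simp add: fun_eq_iff mult.assoc)
  then show ?case using scale.IH by (simp add: root_sum_scale mult.left_commute mult.assoc)
qed

lemma root_sum_orbit_indicator:
  fixes a :: "nat \<Rightarrow> 'a::field_char_0"
  assumes a_nonzero: "\<forall>i<n. a i \<noteq> 0" and j: "j < n"
    and I: "\<forall>x<n. I (\<lambda>_. x) = (if \<exists>\<gamma>\<in>aut_group n a B. \<gamma> j = x then 1 else 0)"
  shows "root_sum n a I \<noteq> 0"
proof -
  define orbit where "orbit = {x\<in>{..<n}. \<exists>\<gamma>\<in>aut_group n a B. \<gamma> j = x}"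
  have "root_sum n a I = (\<Sum>x<n. if \<exists>\<gamma>\<in>aut_group n a B. \<gamma> j = x then a x else 0)"
    unfolding root_sum_def using I by (intro sum.cong) auto
  also have "\<dots> = (\<Sum>x\<in>orbit. a x)"
    unfolding orbit_def by (rule sum.inter_filter[symmetric]) simp
  also have "\<dots> = (\<Sum>x\<in>orbit. a j)"
    using j by (intro sum.cong) (auto simp: orbit_def aut_group_def)
  also have "\<dots> = of_nat (card orbit) * a j" by simp
  finally have root_sum_eq: "root_sum n a I = of_nat (card orbit) * a j" .
  have "j \<in> orbit" unfolding orbit_def using j id_in_aut_group[of n a B] by (auto intro!: bexI[of _ id])
  then have "card orbit \<noteq> 0" by (auto simp: orbit_def)
  then show ?thesis using root_sum_eq a_nonzero j by simp
qed

lemma aut_orbit_of_0_if_multiplicative: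
  fixes a :: "nat \<Rightarrow> 'a::field_char_0"
  assumes "n \<ge> 1" "\<forall>i<n. a i \<noteq> 0" "\<forall>i<n. \<forall>j<n. B i j = B j i" "twin_free n B"
    and S: "(\<Sum>i<n. a i) \<noteq> 0" and mult: "multiplicative n a B" and j: "j < n"
  shows "\<exists>\<gamma>\<in>aut_group n a B. \<gamma> 0 = j"
proof (rule ccontr)
  assume not_in_orbit: "\<not> (\<exists>\<gamma>\<in>aut_group n a B. \<gamma> 0 = j)"
  obtain I0 where I0: "I0 \<in> quantum_graphs n a B 1"
      "\<forall>x<n. I0 (\<lambda>_. x) = (if \<exists>\<gamma>\<in>aut_group n a B. \<gamma> 0 = x then 1 else 0)"
    using orbit_indicator_in_quantum_graphs[OF assms(1-4), of 0] assms(1) by auto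
  obtain Ij where Ij: "Ij \<in> quantum_graphs n a B 1"
      "\<forall>x<n. Ij (\<lambda>_. x) = (if \<exists>\<gamma>\<in>aut_group n a B. \<gamma> j = x then 1 else 0)"
    using orbit_indicator_in_quantum_graphs[OF assms(1-4) j] by auto
  have disjoint: "I0 (\<lambda>_. x) * Ij (\<lambda>_. x) = 0" if x: "x < n" for x
  proof (cases "\<exists>\<gamma>\<in>aut_group n a B. \<gamma> 0 = x")
    case True
    then have "\<not> (\<exists>\<gamma>\<in>aut_group n a B. \<gamma> j = x)" using not_in_orbit aut_group_common_image by blast
    then show ?thesis using Ij(2) x by simp
  qed (use I0(2) x in simp)
  have "root_sum n a (\<lambda>\<psi>. I0 \<psi> * Ij \<psi>) = 0"
    unfolding root_sum_def by (rule sum.neutral) (use disjoint in auto)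
  then show False
    using multiplicative_quantum_graphs[OF mult S I0(1) Ij(1)] assms(1)
      root_sum_orbit_indicator[OF assms(2) _ I0(2)] root_sum_orbit_indicator[OF assms(2) j Ij(2)]
    by simp
qed

lemma aut_transitive_if_multiplicative:
  fixes a :: "nat \<Rightarrow> 'a::field_char_0"
  assumes "n \<ge> 1" "\<forall>i<n. a i \<noteq> 0" "\<forall>i<n. \<forall>j<n. B i j = B j i" "twin_free n B"
    and "(\<Sum>i<n. a i) \<noteq> 0" "multiplicative n a B"
  shows "\<forall>i<n. \<forall>j<n. \<exists>\<gamma>\<in>aut_group n a B. \<gamma> i = j"
proof (intro allI impI)
  fix i j assume "i < n" "j < n"
  then obtain \<gamma>i \<gamma>j where "\<gamma>i \<in> aut_group n a B" "\<gamma>j \<in> aut_group n a B" "\<gamma>i 0 = i" "\<gamma>j 0 = j"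
    using aut_orbit_of_0_if_multiplicative[OF assms] by metis
  then show "\<exists>\<gamma>\<in>aut_group n a B. \<gamma> i = j" by (rule aut_group_common_source)
qed

theorem lemma2p2:
  fixes n :: nat and a :: "nat \<Rightarrow> 'a::field_char_0" and B :: "nat \<Rightarrow> nat \<Rightarrow> 'a"
  assumes "n \<ge> 1"
    and "\<forall>i<n. a i \<noteq> 0"
    and "\<forall>i<n. \<forall>j<n. B i j = B j i"
    and "twin_free n B"
    and "(\<Sum>i<n. a i) \<noteq> 0"
  shows "(\<forall>F1 F2. is_lgraph F1 \<longrightarrow> is_lgraph F2 \<longrightarrow>
            h_w (fst F1) n a B * h_w (fst F2) n a B = h_w (glue F1 F2) n a B)
         \<longleftrightarrow> (\<forall>i<n. \<forall>j<n. \<exists>\<gamma>\<in>aut_group n a B. \<gamma> i = j)"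
  using aut_transitive_if_multiplicative[OF assms] multiplicative_if_aut_transitive[OF assms(5)]
  unfolding multiplicative_def by blast

end
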